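(* Let $\iota(x_0):\mathbb C^{\mathcal L(\Omega)}\to\mathbb C^{\mathcal L(\Omega/x_0)}\otimes\mathbb C^{\mathcal L(x_0)}$ be the linear map $x\mapsto ((x+x_0)/x_0)\otimes(x\cap x_0)$. Equip $\mathbb C^{\mathcal L(\Omega)}$ with the $\mathfrak{W}_q$-module structure $\mathbb C^{\mathcal L(\Omega)}(x_0)$ described in the context, and $\mathbb C^{\mathcal L(\Omega/x_0)}\otimes\mathbb C^{\mathcal L(x_0)}$ with the $U_q(\mathfrak{sl}_2)\otimes U_q(\mathfrak{sl}_2)$-module structure $\mathbb C^{\mathcal L(\Omega/x_0)}(1)\otimes\mathbb C^{\mathcal L(x_0)}(q^{\dim x_0})$. Then for every $X\in\mathfrak{W}_q$, $\iota(x_0)\circ X=\flat(X)\circ\iota(x_0)$.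
   Context: $\Omega$ is a $D$-dimensional vector space over a finite field $\mathbb F$, $q=\sqrt{|\mathbb F|}$; $[x,y]=xy-yx$, $[x,y]_q=qxy-q^{-1}yx$. $U_q(\mathfrak{sl}_2)$ is generated by $E,F,K^{\pm1}$ with $KK^{-1}=K^{-1}K=1$, $[E,K]_q=[K,F]_q=0$, $[E,F]=\frac{K-K^{-1}}{q-q^{-1}}$. For a finite-dimensional $\mathbb F$-vector space $V$ of dimension $N$ and $\lambda\in\mathbb C\setminus\{0\}$, $\mathbb C^{\mathcal L(V)}(\lambda)$ is the $U_q(\mathfrak{sl}_2)$-module on the space with basis the set $\mathcal L(V)$ of subspaces of $V$ given by $Ex=\lambda q^{-N}\sum_{x'\subset\mathrel{\cdot} x}x'$, $Fx=\lambda^{-1}q\sum_{x\subset\mathrel{\cdot} x'}x'$, $K^{\pm1}x=q^{\pm(N-2\dim x)}x$, where $x'\subset\mathrel{\cdot}x$ means $x'\subseteq x$, $\dim x'=\dim x-1$. $\mathfrak{W}_q$ is generated by $E_1,E_2,F_1,F_2,K_1^{\pm1},K_2^{\pm1},I^{\pm1}$ subject to: $I$ central; $II^{-1}=I^{-1}I=1$, $K_1K_1^{-1}=K_1^{-1}K_1=1$, $K_2K_2^{-1}=K_2^{-1}K_2=1$; $[K_1,E_2]=[K_1,F_2]=[K_1,K_2]=[K_2,E_1]=[K_2,F_1]=0$; $[E_1,K_1]_q=[K_1,F_1]_q=[E_2,K_2]_q=[K_2,F_2]_q=0$; $[E_1,E_2]=[E_1,F_2]=[F_1,E_2]=[F_1,F_2]=0$;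 $[E_1,F_1]=\frac{K_1-IK_1^{-1}}{q-q^{-1}}$; $[E_2,F_2]=\frac{IK_2-K_2^{-1}}{q-q^{-1}}$. $\flat:\mathfrak{W}_q\to U_q(\mathfrak{sl}_2)\otimes U_q(\mathfrak{sl}_2)$ is the algebra homomorphism $E_1\mapsto E\otimes1$, $E_2\mapsto1\otimes E$, $F_1\mapsto F\otimes1$, $F_2\mapsto1\otimes F$, $K_1^{\pm1}\mapsto K^{\pm1}\otimes1$, $K_2^{\pm1}\mapsto1\otimes K^{\pm1}$, $I^{\pm1}\mapsto1\otimes1$. Fix $x_0,x_1\in\mathcal L(\Omega)$ with $\Omega=x_0\oplus x_1$; write $u=u_0+u_1$; $\tau(x):(x+x_0)/x_0\to x_0/(x\cap x_0)$, $u+x_0\mapsto u_0+(x\cap x_0)$ ($u\in x$); $|y|$ is the cardinality of $y$. The $\mathfrak{W}_q$-module $\mathbb C^{\mathcal L(\Omega)}(x_0)$ is given by $E_1=q^{\dim x_0-D}L_1$, $E_2=q^{\dim x_0-D}D_1L_2$, $F_1=q^{1-\dim x_0}R_1D_2^{-1}$, $F_2=q^{1-\dim x_0}R_2$, $K_1^{\pm1}=D_1^{\pm1}$, $K_2^{\pm1}=D_2^{\pm1}$, $I^{\pm1}=q^{\mp D}D_1^{\pm1}D_2^{\mp1}((q^2-1)D_3+D_4)^{\pm1}$, where: $L_1x=\sum_{x'\subset\mathrel{\cdot}x,\ x'\cap x_0=x\cap x_0}x'$; $L_2x=\sum_{x'\subset\mathrel{\cdot}x,\ x'+x_0=x+x_0}x'$;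 $R_1x=\sum_{x\subset\mathrel{\cdot}x',\ x'\cap x_0=x\cap x_0}x'$; $R_2x=\sum_{x\subset\mathrel{\cdot}x',\ x'+x_0=x+x_0}x'$; $D_1x=q^{\dim(\Omega/x_0)-2\dim((x+x_0)/x_0)}x$; $D_2x=q^{\dim x_0-2\dim(x\cap x_0)}x$; $D_3x=\sum x'$ over $x'$ with $x'+x_0=x+x_0$, $x'\cap x_0=x\cap x_0$, $\operatorname{rank}(\tau(x')-\tau(x))=1$; $D_4x=(\frac{|x|+|x_0|}{|x\cap x_0|}-1)x$. *)

theory Defs
  imports "HOL-Analysis.Analysis"
begin

(* Omega = 'f^'n, a D-dimensional vector space (D = CARD('n)) over the finite field 'f.
   Subspaces are subsets of Omega in the sense of vec.subspace; dims via vec.dim. *)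

definition Lsub :: "('f::field^'n) set set" where
  "Lsub = {x. vec.subspace x}"

definition ssum :: "('f::field^'n) set \<Rightarrow> ('f^'n) set \<Rightarrow> ('f^'n) set" where
  "ssum A B = {a + b | a b. a \<in> A \<and> b \<in> B}"

definition cov :: "('f::field^'n) set \<Rightarrow> ('f^'n) set \<Rightarrow> bool" where
  "cov x' x \<longleftrightarrow> x' \<subseteq> x \<and> vec.dim x' + 1 = vec.dim x"

(* linear operator on C^S given by its coefficient matrix: basis x \<mapsto> \<Sum>_y M x y \<cdot> y *)
definition mop :: "('a::finite \<Rightarrow> 'a \<Rightarrow> complex) \<Rightarrow> ('a \<Rightarrow> complex) \<Rightarrow> ('a \<Rightarrow> complex)" where
  "mop M v = (\<lambda>y. \<Sum>x\<in>UNIV. v x * M x y)"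

definition scop :: "complex \<Rightarrow> (('a \<Rightarrow> complex) \<Rightarrow> ('a \<Rightarrow> complex)) \<Rightarrow> ('a \<Rightarrow> complex) \<Rightarrow> ('a \<Rightarrow> complex)" where
  "scop c A = (\<lambda>v y. c * A v y)"

definition Vspace :: "(('f::field^'n) set \<Rightarrow> complex) set" where
  "Vspace = {v. \<forall>x. x \<notin> Lsub \<longrightarrow> v x = 0}"

datatype 'g fterm = Gen 'g | Scal complex | Plus "'g fterm" "'g fterm" | Times "'g fterm" "'g fterm"

primrec act :: "('g \<Rightarrow> ('v \<Rightarrow> complex) \<Rightarrow> ('v \<Rightarrow> complex)) \<Rightarrow> 'g fterm \<Rightarrow> ('v \<Rightarrow> complex) \<Rightarrow> ('v \<Rightarrow> complex)" where
  "act \<rho> (Gen g) = \<rho> g"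
| "act \<rho> (Scal c) = (\<lambda>v y. c * v y)"
| "act \<rho> (Plus a b) = (\<lambda>v y. act \<rho> a v y + act \<rho> b v y)"
| "act \<rho> (Times a b) = act \<rho> a \<circ> act \<rho> b"

primrec fsubst :: "('g \<Rightarrow> 'h fterm) \<Rightarrow> 'g fterm \<Rightarrow> 'h fterm" where
  "fsubst f (Gen g) = f g"
| "fsubst f (Scal c) = Scal c"
| "fsubst f (Plus a b) = Plus (fsubst f a) (fsubst f b)"
| "fsubst f (Times a b) = Times (fsubst f a) (fsubst f b)"

datatype ugen = UE | UF | UK | UKi

(* generators of U_q(sl2) \<otimes> U_q(sl2): a\<otimes>1 and 1\<otimes>a *)
datatype tgen = TL ugen | TR ugen

datatype wgen = WE1 | WE2 | WF1 | WF2 | WK1 | WK1i | WK2 | WK2i | WI | WIi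

fun flat_gen :: "wgen \<Rightarrow> tgen fterm" where
  "flat_gen WE1 = Gen (TL UE)"
| "flat_gen WE2 = Gen (TR UE)"
| "flat_gen WF1 = Gen (TL UF)"
| "flat_gen WF2 = Gen (TR UF)"
| "flat_gen WK1 = Gen (TL UK)"
| "flat_gen WK1i = Gen (TL UKi)"
| "flat_gen WK2 = Gen (TR UK)"
| "flat_gen WK2i = Gen (TR UKi)"
| "flat_gen WI = Scal 1"
| "flat_gen WIi = Scal 1"

definition flat :: "wgen fterm \<Rightarrow> tgen fterm" where
  "flat = fsubst flat_gen"

(* ---------- the U_q(sl2)-module C^{L(V)}(lam) ----------
   V is represented by the interval of subspaces between lo and hi (lo \<subseteq> hi),
   i.e. L(hi/lo) \<cong> {x subspace. lo \<subseteq> x \<subseteq> hi} via x \<mapsto> x/lo, dim(x/lo) = dim x - dim lo. *)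

definition Lint :: "('f::field^'n) set \<Rightarrow> ('f^'n) set \<Rightarrow> ('f^'n) set set" where
  "Lint lo hi = {x. vec.subspace x \<and> lo \<subseteq> x \<and> x \<subseteq> hi}"

definition rdim :: "('f::field^'n) set \<Rightarrow> ('f^'n) set \<Rightarrow> int" where
  "rdim lo x = int (vec.dim x) - int (vec.dim lo)"

fun Umat :: "complex \<Rightarrow> complex \<Rightarrow> ('f::field^'n) set \<Rightarrow> ('f^'n) set \<Rightarrow> ugen
             \<Rightarrow> ('f^'n) set \<Rightarrow> ('f^'n) set \<Rightarrow> complex" where
  "Umat q lam lo hi UE = (\<lambda>x x'. if x \<in> Lint lo hi \<and> x' \<in> Lint lo hi \<and> cov x' x
        then lam * q powi (- rdim lo hi) else 0)"
| "Umat q lam lo hi UF = (\<lambda>x x'. if x \<in> Lint lo hi \<and> x' \<in> Lint lo hi \<and> cov x x'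
        then q / lam else 0)"
| "Umat q lam lo hi UK = (\<lambda>x x'. if x \<in> Lint lo hi \<and> x' = x
        then q powi (rdim lo hi - 2 * rdim lo x) else 0)"
| "Umat q lam lo hi UKi = (\<lambda>x x'. if x \<in> Lint lo hi \<and> x' = x
        then q powi (- (rdim lo hi - 2 * rdim lo x)) else 0)"

fun tens_act :: "(ugen \<Rightarrow> 'a::finite \<Rightarrow> 'a \<Rightarrow> complex) \<Rightarrow> (ugen \<Rightarrow> 'b::finite \<Rightarrow> 'b \<Rightarrow> complex)
                 \<Rightarrow> tgen \<Rightarrow> ('a \<times> 'b \<Rightarrow> complex) \<Rightarrow> ('a \<times> 'b \<Rightarrow> complex)" where
  "tens_act M1 M2 (TL u) = (\<lambda>w (y, z). \<Sum>y'\<in>UNIV. w (y', z) * M1 u y' y)"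
| "tens_act M1 M2 (TR u) = (\<lambda>w (y, z). \<Sum>z'\<in>UNIV. w (y, z') * M2 u z' z)"

definition proj0 :: "('f::field^'n) set \<Rightarrow> ('f^'n) set \<Rightarrow> 'f^'n \<Rightarrow> 'f^'n" where
  "proj0 x0 x1 u = (THE a. a \<in> x0 \<and> u - a \<in> x1)"

(* tau(x): (x+x0)/x0 \<rightarrow> x0/(x\<inter>x0), u + x0 \<mapsto> u0 + (x\<inter>x0) for u \<in> x;
   given on representatives w \<in> x + x0, value a representative in x0 *)
definition tau :: "('f::field^'n) set \<Rightarrow> ('f^'n) set \<Rightarrow> ('f^'n) set \<Rightarrow> 'f^'n \<Rightarrow> 'f^'n" where
  "tau x0 x1 x w = proj0 x0 x1 (SOME u. u \<in> x \<and> u - w \<in> x0)"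

(* rank of tau(x') - tau(x): dimension of its image, a subspace of x0/(x\<inter>x0),
   computed as dim(preimage in x0) - dim(x\<inter>x0) *)
definition rank_tau_diff :: "('f::field^'n) set \<Rightarrow> ('f^'n) set \<Rightarrow> ('f^'n) set \<Rightarrow> ('f^'n) set \<Rightarrow> nat" where
  "rank_tau_diff x0 x1 x x' =
     vec.dim (ssum ((\<lambda>w. tau x0 x1 x' w - tau x0 x1 x w) ` ssum x x0) (x \<inter> x0)) - vec.dim (x \<inter> x0)"

definition L1 where
  "L1 x0 = (\<lambda>x x'. if x \<in> Lsub \<and> x' \<in> Lsub \<and> cov x' x \<and> x' \<inter> x0 = x \<inter> x0 then (1::complex) else 0)"
definition L2 where
  "L2 x0 = (\<lambda>x x'. if x \<in> Lsub \<and> x' \<in> Lsub \<and> cov x' x \<and> ssum x' x0 = ssum x x0 then (1::complex) else 0)"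
definition R1 where
  "R1 x0 = (\<lambda>x x'. if x \<in> Lsub \<and> x' \<in> Lsub \<and> cov x x' \<and> x' \<inter> x0 = x \<inter> x0 then (1::complex) else 0)"
definition R2 where
  "R2 x0 = (\<lambda>x x'. if x \<in> Lsub \<and> x' \<in> Lsub \<and> cov x x' \<and> ssum x' x0 = ssum x x0 then (1::complex) else 0)"

definition diagm :: "(('f::field^'n) set \<Rightarrow> complex) \<Rightarrow> ('f^'n) set \<Rightarrow> ('f^'n) set \<Rightarrow> complex" where
  "diagm d = (\<lambda>x x'. if x \<in> Lsub \<and> x' = x then d x else 0)"

definition e1 :: "('f::field^'n) set \<Rightarrow> ('f^'n) set \<Rightarrow> int" where
  "e1 x0 x = (int (vec.dim (UNIV :: ('f^'n) set)) - int (vec.dim x0))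
             - 2 * (int (vec.dim (ssum x x0)) - int (vec.dim x0))"

definition e2 :: "('f::field^'n) set \<Rightarrow> ('f^'n) set \<Rightarrow> int" where
  "e2 x0 x = int (vec.dim x0) - 2 * int (vec.dim (x \<inter> x0))"

definition D1 where "D1 q x0 = diagm (\<lambda>x. q powi e1 x0 x)"
definition D1i where "D1i q x0 = diagm (\<lambda>x. q powi (- e1 x0 x))"
definition D2 where "D2 q x0 = diagm (\<lambda>x. q powi e2 x0 x)"
definition D2i where "D2i q x0 = diagm (\<lambda>x. q powi (- e2 x0 x))"

definition D3 where
  "D3 x0 x1 = (\<lambda>x x'. if x \<in> Lsub \<and> x' \<in> Lsub \<and> ssum x' x0 = ssum x x0 \<and> x' \<inter> x0 = x \<inter> x0
        \<and> rank_tau_diff x0 x1 x x' = 1 then (1::complex) else 0)"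

definition D4 where
  "D4 x0 = diagm (\<lambda>x. of_real ((real (card x) + real (card x0)) / real (card (x \<inter> x0)) - 1))"

definition Top where
  "Top q x0 x1 = (\<lambda>v y. (q\<^sup>2 - 1) * mop (D3 x0 x1) v y + mop (D4 x0) v y)"

definition Dim :: "'f::field itself \<Rightarrow> 'n::finite itself \<Rightarrow> int" where
  "Dim _ _ = int (vec.dim (UNIV :: ('f^'n) set))"

fun Wop :: "complex \<Rightarrow> ('f::{field,finite}^'n) set \<Rightarrow> ('f^'n) set \<Rightarrow> wgen
            \<Rightarrow> (('f^'n) set \<Rightarrow> complex) \<Rightarrow> (('f^'n) set \<Rightarrow> complex)" where
  "Wop q x0 x1 WE1 = scop (q powi (int (vec.dim x0) - Dim TYPE('f) TYPE('n))) (mop (L1 x0))"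
| "Wop q x0 x1 WE2 = scop (q powi (int (vec.dim x0) - Dim TYPE('f) TYPE('n))) (mop (D1 q x0) \<circ> mop (L2 x0))"
| "Wop q x0 x1 WF1 = scop (q powi (1 - int (vec.dim x0))) (mop (R1 x0) \<circ> mop (D2i q x0))"
| "Wop q x0 x1 WF2 = scop (q powi (1 - int (vec.dim x0))) (mop (R2 x0))"
| "Wop q x0 x1 WK1 = mop (D1 q x0)"
| "Wop q x0 x1 WK1i = mop (D1i q x0)"
| "Wop q x0 x1 WK2 = mop (D2 q x0)"
| "Wop q x0 x1 WK2i = mop (D2i q x0)"
| "Wop q x0 x1 WI = scop (q powi (- Dim TYPE('f) TYPE('n)))
      (mop (D1 q x0) \<circ> mop (D2i q x0) \<circ> Top q x0 x1)"
| "Wop q x0 x1 WIi = scop (q powi (Dim TYPE('f) TYPE('n)))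
      (mop (D1i q x0) \<circ> mop (D2 q x0) \<circ> inv_into Vspace (Top q x0 x1))"

definition iota :: "('f::{field,finite}^'n) set \<Rightarrow> (('f^'n) set \<Rightarrow> complex) \<Rightarrow> (('f^'n) set \<times> ('f^'n) set \<Rightarrow> complex)" where
  "iota x0 v = (\<lambda>(y, z). \<Sum>x\<in>Lsub. v x * (if y = ssum x x0 \<and> z = x \<inter> x0 then 1 else 0))"

end

(*
  Both sides are algebra homomorphisms in X, so it suffices to compare them on the generators
  of W_q, one basis vector x at a time; iota(x0) sends x to the pair (x + x0, x \<inter> x0).
  For E_i and F_i the neighbours x' of x with x' + x0 or x' \<inter> x0 prescribed are hyperplanes or
  upper covers inside a subspace, and their numbers are powers of |F| = q^2 that cancel the
  normalising powers of q.  The operator (q^2 - 1) D_3 + D_4 preserves the fibres of iota(x0)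
  and has column sums |F|^(dim(x + x0) - dim(x \<inter> x0)), which q^-D D_1 D_2^-1 cancels, so I
  acts as the identity; the point is that rank(tau(x') - tau(x)) = 1 means that x and x' span a
  common upper cover.  For I^-1 this operator must be invertible, which holds because as a real
  quadratic form it dominates the identity.
*)

theory Submission
  imports Defs
begin

section \<open>Counting subspaces over a finite field\<close>

lemma card_subspace:
  fixes S :: "('f::{field,finite}^'n) set"
  assumes "vec.subspace S"
  shows "card S = CARD('f) ^ vec.dim S"
proof -
  obtain B where B: "finite B" "B \<subseteq> S" "vec.independent B" "vec.span B = S" "card B = vec.dim S"
    using vec.basis_subspace_exists[OF assms] by metis
  let ?f = "\<lambda>c. \<Sum>v\<in>B. c v *s v" and ?P = "PiE B (\<lambda>_. UNIV::'f set)"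
  have "bij_betw ?f ?P S"
  proof (rule bij_betwI')
    fix c d assume c: "c \<in> ?P" and d: "d \<in> ?P"
    show "(?f c = ?f d) = (c = d)"
    proof
      assume "?f c = ?f d"
      then have "(\<Sum>v\<in>B. (c v - d v) *s v) = 0"
        by (simp add: sum_subtractf vector_sub_rdistrib)
      then have "\<forall>v\<in>B. c v - d v = 0"
        using B(3) unfolding vec.independent_explicit
        by (auto dest: spec[of _ "\<lambda>v. c v - d v"])
      then show "c = d" using c d by (intro PiE_ext[of c B "\<lambda>_. UNIV" d]) simp_all
    qed simp
  next
    fix c assume "c \<in> ?P"
    have "?f c \<in> vec.span B" by (intro vec.span_sum vec.span_scale vec.span_base)
    then show "?f c \<in> S" using B(4) by simp
  next
    fix s assume "s \<in> S"
    then obtain c where c: "s = ?f c" using B(1,4) vec.span_finite[of B] by auto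
    show "\<exists>c\<in>?P. s = ?f c"
      by (rule bexI[of _ "restrict c B"]) (simp_all add: c)
  qed
  then have "card S = card ?P" by (simp add: bij_betw_same_card)
  also have "\<dots> = CARD('f) ^ vec.dim S" using B(1,5) by (simp add: card_PiE)
  finally show ?thesis .
qed

lemma card_field_ge_2: "2 \<le> CARD('f::{field,finite})"
proof -
  have "card {0::'f, 1} \<le> CARD('f)" by (rule card_mono) simp_all
  then show ?thesis by simp
qed

lemma card_diff_subspace:
  fixes x y :: "('f::{field,finite}^'n) set"
  assumes "vec.subspace x" "vec.subspace y" "x \<subseteq> y"
  shows "card (y - x) = CARD('f) ^ vec.dim y - CARD('f) ^ vec.dim x"
  using card_Diff_subset[OF _ assms(3)] card_subspace[OF assms(1)] card_subspace[OF assms(2)]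
  by (simp add: finite_subset)

lemma subspace_ssum: "vec.subspace A \<Longrightarrow> vec.subspace B \<Longrightarrow> vec.subspace (ssum A B)"
  unfolding ssum_def by (rule vec.subspace_sums)

lemma dim_ssum_inter:
  "vec.subspace A \<Longrightarrow> vec.subspace B \<Longrightarrow> vec.dim (ssum A B) + vec.dim (A \<inter> B) = vec.dim A + vec.dim B"
  unfolding ssum_def by (rule vec.dim_sums_Int)

lemma ssum_subset_left: "vec.subspace B \<Longrightarrow> A \<subseteq> ssum A B"
  unfolding ssum_def using vec.subspace_0 by force

lemma ssum_subset_right: "vec.subspace A \<Longrightarrow> B \<subseteq> ssum A B"
  unfolding ssum_def using vec.subspace_0 by force

lemma ssum_least: "vec.subspace C \<Longrightarrow> A \<subseteq> C \<Longrightarrow> B \<subseteq> C \<Longrightarrow> ssum A B \<subseteq> C"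
  unfolding ssum_def using vec.subspace_add by blast

lemma ssum_memI: "a \<in> A \<Longrightarrow> b \<in> B \<Longrightarrow> a + b \<in> ssum A B"
  unfolding ssum_def by blast

lemma ssum_memE: "x \<in> ssum A B \<Longrightarrow> (\<And>a b. a \<in> A \<Longrightarrow> b \<in> B \<Longrightarrow> x = a + b \<Longrightarrow> P) \<Longrightarrow> P"
  unfolding ssum_def by blast

lemma ssum_mono: "A \<subseteq> A' \<Longrightarrow> B \<subseteq> B' \<Longrightarrow> ssum A B \<subseteq> ssum A' B'"
  unfolding ssum_def by blast

lemma ssum_absorb: "vec.subspace A \<Longrightarrow> vec.subspace B \<Longrightarrow> A \<subseteq> B \<Longrightarrow> ssum A B = B"
  by (rule subset_antisym[OF ssum_least[OF _ _ order.refl] ssum_subset_right])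

lemma dim_psubset:
  "vec.subspace A \<Longrightarrow> vec.subspace B \<Longrightarrow> A \<subseteq> B \<Longrightarrow> A \<noteq> B \<Longrightarrow> vec.dim A < vec.dim B"
  using vec.subspace_dim_equal vec.dim_subset by (metis le_neq_implies_less not_le)

lemma span_insert_subspace:
  assumes "vec.subspace s" "v \<notin> s"
  shows "vec.subspace (vec.span (insert v s))" "s \<subseteq> vec.span (insert v s)"
    "v \<in> vec.span (insert v s)" "vec.dim (vec.span (insert v s)) = vec.dim s + 1"
proof -
  show "vec.subspace (vec.span (insert v s))" by simp
  show "s \<subseteq> vec.span (insert v s)" by (meson subset_insertI vec.span_superset order_trans)
  show "v \<in> vec.span (insert v s)" by (simp add: vec.span_base)
  have "v \<notin> vec.span s" using assms vec.span_eq_iff by blast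
  then show "vec.dim (vec.span (insert v s)) = vec.dim s + 1"
    unfolding vec.dim_span vec.dim_insert by simp
qed

lemma span_insert_least:
  "vec.subspace w \<Longrightarrow> s \<subseteq> w \<Longrightarrow> v \<in> w \<Longrightarrow> vec.span (insert v s) \<subseteq> w"
  by (simp add: vec.span_minimal)

lemma span_insert_eq:
  assumes "vec.subspace s" "vec.subspace w" "s \<subseteq> w" "v \<in> w" "v \<notin> s"
    and "vec.dim w = vec.dim s + 1"
  shows "vec.span (insert v s) = w"
  using span_insert_subspace[OF assms(1,5)] span_insert_least[OF assms(2,3,4)] assms(2,6)
  by (intro vec.subspace_dim_equal) auto

definition upper_covers :: "('f::field^'n) set \<Rightarrow> ('f^'n) set \<Rightarrow> ('f^'n) set set" where
  "upper_covers x y = {w. vec.subspace w \<and> x \<subseteq> w \<and> w \<subseteq> y \<and> vec.dim w = vec.dim x + 1}"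

definition hyperplanes :: "('f::field^'n) set \<Rightarrow> ('f^'n) set \<Rightarrow> ('f^'n) set set" where
  "hyperplanes s V = {g. vec.subspace g \<and> s \<subseteq> g \<and> g \<subseteq> V \<and> vec.dim g + 1 = vec.dim V}"

text \<open>Every vector of \<open>y - x\<close> lies in exactly one upper cover of \<open>x\<close> inside \<open>y\<close>,
  namely the span of \<open>x\<close> and that vector.\<close>

lemma card_diff_eq_card_upper_covers:
  fixes x y :: "('f::{field,finite}^'n) set"
  assumes "vec.subspace x" "vec.subspace y" "x \<subseteq> y"
  shows "card (y - x) = card (upper_covers x y) * (CARD('f) ^ (vec.dim x + 1) - CARD('f) ^ vec.dim x)"
proof -
  let ?W = "upper_covers x y"
  have cover: "y - x = (\<Union>w\<in>?W. w - x)"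
  proof
    show "y - x \<subseteq> (\<Union>w\<in>?W. w - x)"
    proof
      fix v assume v: "v \<in> y - x"
      then have "vec.span (insert v x) \<in> ?W" unfolding upper_covers_def
        using span_insert_subspace[OF assms(1), of v] span_insert_least[OF assms(2,3), of v] by auto
      moreover have "v \<in> vec.span (insert v x) - x" using v by (simp add: vec.span_base)
      ultimately show "v \<in> (\<Union>w\<in>?W. w - x)" by blast
    qed
  qed (auto simp: upper_covers_def)
  have disjoint: "(w1 - x) \<inter> (w2 - x) = {}" if "w1 \<in> ?W" "w2 \<in> ?W" "w1 \<noteq> w2" for w1 w2
  proof (rule ccontr)
    assume "(w1 - x) \<inter> (w2 - x) \<noteq> {}"
    then obtain v where v: "v \<in> w1" "v \<in> w2" "v \<notin> x" by blast
    have "vec.span (insert v x) = w1"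
      using that(1) v unfolding upper_covers_def by (intro span_insert_eq[OF assms(1)]) auto
    moreover have "vec.span (insert v x) = w2"
      using that(2) v unfolding upper_covers_def by (intro span_insert_eq[OF assms(1)]) auto
    ultimately show False using that(3) by simp
  qed
  have "card (y - x) = (\<Sum>w\<in>?W. card (w - x))"
    unfolding cover by (rule card_UN_disjoint) (use disjoint in auto)
  also have "\<dots> = card ?W * (CARD('f) ^ (vec.dim x + 1) - CARD('f) ^ vec.dim x)"
    using card_diff_subspace[OF assms(1)] by (simp add: upper_covers_def)
  finally show ?thesis .
qed

lemma card_upper_covers:
  fixes x y :: "('f::{field,finite}^'n) set"
  assumes "vec.subspace x" "vec.subspace y" "x \<subseteq> y"
  shows "int (card (upper_covers x y)) * (int CARD('f) - 1) = int CARD('f) ^ (vec.dim y - vec.dim x) - 1"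
proof -
  let ?Q = "CARD('f)" and ?P = "int CARD('f) ^ vec.dim x"
  have "int (card (upper_covers x y)) * int (?Q ^ (vec.dim x + 1) - ?Q ^ vec.dim x)
      = int (?Q ^ vec.dim y - ?Q ^ vec.dim x)"
    using card_diff_eq_card_upper_covers[OF assms] card_diff_subspace[OF assms] by simp
  moreover have "int (?Q ^ (vec.dim x + 1) - ?Q ^ vec.dim x) = ?P * (int ?Q - 1)"
    using card_field_ge_2[where 'f='f] by (simp add: of_nat_diff algebra_simps)
  moreover have "int (?Q ^ vec.dim y - ?Q ^ vec.dim x) = ?P * (int ?Q ^ (vec.dim y - vec.dim x) - 1)"
  proof -
    have "?Q ^ vec.dim x \<le> ?Q ^ vec.dim y"
      using card_field_ge_2[where 'f='f] vec.dim_subset[OF assms(3)] by (auto intro: power_increasing)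
    moreover have "int ?Q ^ vec.dim y = ?P * int ?Q ^ (vec.dim y - vec.dim x)"
      using vec.dim_subset[OF assms(3)] by (simp add: power_add[symmetric])
    ultimately show ?thesis by (simp add: of_nat_diff right_diff_distrib)
  qed
  ultimately have "?P * (int (card (upper_covers x y)) * (int ?Q - 1)) = ?P * (int ?Q ^ (vec.dim y - vec.dim x) - 1)"
    by (simp only: mult_ac)
  then show ?thesis using card_field_ge_2[where 'f='f] by simp
qed

lemma card_upper_covers_not_within:
  fixes x y y' :: "('f::{field,finite}^'n) set"
  assumes "vec.subspace x" "vec.subspace y" "vec.subspace y'" "x \<subseteq> y" "y \<subseteq> y'"
    and "vec.dim y' = vec.dim y + 1"
  shows "card {w \<in> upper_covers x y'. \<not> w \<subseteq> y} = CARD('f) ^ (vec.dim y - vec.dim x)"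
proof -
  let ?Q = "int CARD('f)"
  have "{w \<in> upper_covers x y'. w \<subseteq> y} = upper_covers x y"
    using assms unfolding upper_covers_def by auto
  then have "{w \<in> upper_covers x y'. \<not> w \<subseteq> y} = upper_covers x y' - upper_covers x y"
    "upper_covers x y \<subseteq> upper_covers x y'"
    by blast+
  then have "int (card {w \<in> upper_covers x y'. \<not> w \<subseteq> y}) * (?Q - 1)
      = int (card (upper_covers x y')) * (?Q - 1) - int (card (upper_covers x y)) * (?Q - 1)"
    by (simp add: card_Diff_subset card_mono of_nat_diff algebra_simps)
  also have "\<dots> = (?Q ^ (vec.dim y - vec.dim x + 1) - 1) - (?Q ^ (vec.dim y - vec.dim x) - 1)"
  proof -
    have "vec.dim y' - vec.dim x = vec.dim y - vec.dim x + 1"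
      using assms(6) vec.dim_subset[OF assms(4)] by simp
    then show ?thesis
      using card_upper_covers[OF assms(1,3) order_trans[OF assms(4,5)]] card_upper_covers[OF assms(1,2,4)]
      by simp
  qed
  also have "\<dots> = ?Q ^ (vec.dim y - vec.dim x) * (?Q - 1)"
    by (simp add: algebra_simps)
  finally have "int (card {w \<in> upper_covers x y'. \<not> w \<subseteq> y}) * (?Q - 1)
      = ?Q ^ (vec.dim y - vec.dim x) * (?Q - 1)" .
  moreover have "?Q - 1 \<noteq> 0" using card_field_ge_2[where 'f='f] by simp
  ultimately have "int (card {w \<in> upper_covers x y'. \<not> w \<subseteq> y}) = ?Q ^ (vec.dim y - vec.dim x)"
    by simp
  then show ?thesis by (simp add: of_nat_eq_iff[symmetric])
qed

lemma sum_card_filter_swap: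
  assumes "finite A" "finite B"
  shows "(\<Sum>a\<in>A. card {b \<in> B. R a b}) = (\<Sum>b\<in>B. card {a \<in> A. R a b})"
proof -
  have c: "\<And>C P. finite C \<Longrightarrow> card {c\<in>C. P c} = (\<Sum>c\<in>C. if P c then 1 else 0::nat)"
    by (simp add: sum.inter_filter[symmetric])
  show ?thesis using assms by (simp add: c sum.swap[of _ A B])
qed

lemma hyperplanes_containing:
  assumes "vec.subspace s" "v \<notin> s"
  shows "{g \<in> hyperplanes s V. v \<in> g} = hyperplanes (vec.span (insert v s)) V"
proof
  show "{g \<in> hyperplanes s V. v \<in> g} \<subseteq> hyperplanes (vec.span (insert v s)) V"
    unfolding hyperplanes_def using span_insert_least span_insert_subspace[OF assms] by auto
  show "hyperplanes (vec.span (insert v s)) V \<subseteq> {g \<in> hyperplanes s V. v \<in> g}"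
    unfolding hyperplanes_def using span_insert_subspace[OF assms] by auto
qed

text \<open>Double counting of the pairs \<open>(v, g)\<close> with \<open>v \<in> g - s\<close>.\<close>

lemma card_hyperplanes_double_count:
  fixes s V :: "('f::{field,finite}^'n) set"
  assumes "vec.subspace s" "vec.subspace V" "s \<subseteq> V"
  shows "card (hyperplanes s V) * (CARD('f) ^ (vec.dim V - 1) - CARD('f) ^ vec.dim s)
       = (\<Sum>v\<in>V - s. card (hyperplanes (vec.span (insert v s)) V))"
proof -
  let ?H = "hyperplanes s V"
  have "card {v \<in> V - s. v \<in> g} = CARD('f) ^ (vec.dim V - 1) - CARD('f) ^ vec.dim s"
    if "g \<in> ?H" for g
  proof -
    have "{v \<in> V - s. v \<in> g} = g - s" "vec.dim g = vec.dim V - 1"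
      using that unfolding hyperplanes_def by auto
    then show ?thesis using that card_diff_subspace[OF assms(1), of g] unfolding hyperplanes_def by simp
  qed
  then have "card ?H * (CARD('f) ^ (vec.dim V - 1) - CARD('f) ^ vec.dim s)
      = (\<Sum>g\<in>?H. card {v \<in> V - s. v \<in> g})"
    by simp
  also have "\<dots> = (\<Sum>v\<in>V - s. card {g \<in> ?H. v \<in> g})"
    by (rule sum_card_filter_swap) simp_all
  also have "\<dots> = (\<Sum>v\<in>V - s. card (hyperplanes (vec.span (insert v s)) V))"
    using hyperplanes_containing[OF assms(1)] by simp
  finally show ?thesis .
qed

lemma hyperplanes_of_dim_eq:
  assumes "vec.subspace s" "vec.subspace V" "s \<subseteq> V" "vec.dim V = vec.dim s"
  shows "hyperplanes s V = {}"
  using assms vec.subspace_dim_equal[OF assms(1-3)] unfolding hyperplanes_def by auto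

lemma hyperplanes_of_cover:
  assumes "vec.subspace s" "s \<subseteq> V" "vec.dim V = vec.dim s + 1"
  shows "hyperplanes s V = {s}"
  using assms unfolding hyperplanes_def by (auto dest: vec.subspace_dim_equal)

lemma card_hyperplanes_step:
  fixes s V :: "('f::{field,finite}^'n) set"
  assumes "vec.subspace s" "vec.subspace V" "s \<subseteq> V" "vec.dim V = vec.dim s + k" "k = j + 2"
    and IH: "\<And>v. v \<in> V - s \<Longrightarrow>
      int (card (hyperplanes (vec.span (insert v s)) V)) * (int CARD('f) - 1) = int CARD('f) ^ (j + 1) - 1"
  shows "int (card (hyperplanes s V)) * (int CARD('f) - 1) = int CARD('f) ^ k - 1"
proof -
  let ?Q = "CARD('f)"
  let ?P = "int ?Q ^ vec.dim s" and ?R = "int ?Q ^ (j + 1) - 1"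
  have Q2: "2 \<le> ?Q" by (rule card_field_ge_2)
  have "int (card (hyperplanes s V)) * (?P * ?R) * (int ?Q - 1)
      = int (card (hyperplanes s V) * (?Q ^ (vec.dim V - 1) - ?Q ^ vec.dim s)) * (int ?Q - 1)"
  proof -
    have "?Q ^ vec.dim s \<le> ?Q ^ (vec.dim V - 1)"
      using Q2 assms(4,5) by (intro power_increasing) auto
    then have "int (?Q ^ (vec.dim V - 1) - ?Q ^ vec.dim s) = int ?Q ^ (vec.dim V - 1) - ?P"
      by (simp add: of_nat_diff)
    also have "\<dots> = ?P * ?R"
      using assms(4,5) by (simp add: power_add right_diff_distrib)
    finally show ?thesis by simp
  qed
  also have "\<dots> = int (card (V - s)) * ?R"
    unfolding card_hyperplanes_double_count[OF assms(1-3)]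
    using IH by (simp add: of_nat_sum sum_distrib_right)
  also have "\<dots> = (int ?Q ^ k - 1) * (?P * ?R)"
  proof -
    have "?Q ^ vec.dim s \<le> ?Q ^ vec.dim V"
      using Q2 assms(4,5) by (intro power_increasing) auto
    then have "int (card (V - s)) = int ?Q ^ vec.dim V - ?P"
      using card_diff_subspace[OF assms(1-3)] by (simp add: of_nat_diff)
    also have "\<dots> = ?P * (int ?Q ^ k - 1)"
      using assms(4,5) by (simp add: power_add right_diff_distrib)
    finally show ?thesis by simp
  qed
  finally have "(int (card (hyperplanes s V)) * (int ?Q - 1)) * (?P * ?R)
      = (int ?Q ^ k - 1) * (?P * ?R)"
    by (simp only: mult_ac)
  moreover have "?P * ?R \<noteq> 0"
    using Q2 one_less_power[of "int ?Q" "j + 1"] by simp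
  ultimately show ?thesis by simp
qed

lemma card_hyperplanes:
  fixes s V :: "('f::{field,finite}^'n) set"
  assumes "vec.subspace s" "vec.subspace V" "s \<subseteq> V"
  shows "int (card (hyperplanes s V)) * (int CARD('f) - 1) = int CARD('f) ^ (vec.dim V - vec.dim s) - 1"
proof -
  have "int (card (hyperplanes s V)) * (int CARD('f) - 1) = int CARD('f) ^ k - 1"
    if "vec.subspace s" "s \<subseteq> V" "vec.dim V = vec.dim s + k" for k s
    using that
  proof (induction k arbitrary: s rule: nat_less_induct)
    case (1 k)
    have "k = 0 \<or> k = 1 \<or> (\<exists>j. k = j + 2)" by presburger
    then consider "k = 0" | "k = 1" | j where "k = j + 2" by blast
    then show ?case
    proof cases
      case 1
      then show ?thesis using hyperplanes_of_dim_eq[OF "1.prems"(1) assms(2) "1.prems"(2)] "1.prems"(3) by simp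
    next
      case 2
      then show ?thesis using hyperplanes_of_cover[OF "1.prems"(1) "1.prems"(2)] "1.prems"(3) by simp
    next
      case 3
      show ?thesis
      proof (rule card_hyperplanes_step[OF "1.prems"(1) assms(2) "1.prems"(2,3) 3])
        fix v assume v: "v \<in> V - s"
        note w = span_insert_subspace[OF "1.prems"(1), of v]
        have "vec.dim V = vec.dim (vec.span (insert v s)) + (j + 1)"
          using w(4) v 3 "1.prems"(3) by simp
        moreover have "vec.span (insert v s) \<subseteq> V"
          using span_insert_least[OF assms(2) "1.prems"(2), of v] v by simp
        moreover have "j + 1 < k" using 3 by simp
        ultimately show "int (card (hyperplanes (vec.span (insert v s)) V)) * (int CARD('f) - 1)
            = int CARD('f) ^ (j + 1) - 1"
          using "1.IH" w(1) by blast
      qed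
    qed
  qed
  then show ?thesis
    using assms vec.dim_subset[OF assms(3)] by simp
qed

lemma card_hyperplanes_not_containing:
  fixes z' z V :: "('f::{field,finite}^'n) set"
  assumes "vec.subspace z'" "vec.subspace z" "vec.subspace V" "z' \<subseteq> z" "z \<subseteq> V"
    and "vec.dim z = vec.dim z' + 1"
  shows "card {g \<in> hyperplanes z' V. \<not> z \<subseteq> g} = CARD('f) ^ (vec.dim V - vec.dim z)"
proof -
  let ?Q = "int CARD('f)"
  have "{g \<in> hyperplanes z' V. z \<subseteq> g} = hyperplanes z V"
    using assms unfolding hyperplanes_def by auto
  then have "{g \<in> hyperplanes z' V. \<not> z \<subseteq> g} = hyperplanes z' V - hyperplanes z V"
    "hyperplanes z V \<subseteq> hyperplanes z' V"
    by blast+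
  then have "int (card {g \<in> hyperplanes z' V. \<not> z \<subseteq> g}) * (?Q - 1)
      = int (card (hyperplanes z' V)) * (?Q - 1) - int (card (hyperplanes z V)) * (?Q - 1)"
    by (simp add: card_Diff_subset card_mono of_nat_diff algebra_simps)
  also have "\<dots> = (?Q ^ (vec.dim V - vec.dim z + 1) - 1) - (?Q ^ (vec.dim V - vec.dim z) - 1)"
  proof -
    have "vec.dim V - vec.dim z' = vec.dim V - vec.dim z + 1"
      using assms(6) vec.dim_subset[OF assms(5)] by simp
    then show ?thesis
      using card_hyperplanes[OF assms(1,3) order_trans[OF assms(4,5)]] card_hyperplanes[OF assms(2,3,5)]
      by simp
  qed
  also have "\<dots> = ?Q ^ (vec.dim V - vec.dim z) * (?Q - 1)"
    by (simp add: algebra_simps)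
  finally have "int (card {g \<in> hyperplanes z' V. \<not> z \<subseteq> g}) * (?Q - 1)
      = ?Q ^ (vec.dim V - vec.dim z) * (?Q - 1)" .
  moreover have "?Q - 1 \<noteq> 0" using card_field_ge_2[where 'f='f] by simp
  ultimately have "int (card {g \<in> hyperplanes z' V. \<not> z \<subseteq> g}) = ?Q ^ (vec.dim V - vec.dim z)"
    by simp
  then show ?thesis by (simp add: of_nat_eq_iff[symmetric])
qed

section \<open>Subspaces relative to \<open>x0\<close>\<close>

locale iota_split =
  fixes x0 :: "('f::{field,finite}^'n) set"
  assumes x0_subspace: "vec.subspace x0"
begin

text \<open>\<open>Y x\<close> and \<open>Z x\<close> represent \<open>(x + x0)/x0\<close> (by its preimage) and \<open>x \<inter> x0\<close>, the two
  tensor factors of \<open>\<iota>(x0) x\<close>.\<close>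

abbreviation Y where "Y x \<equiv> ssum x x0"
abbreviation Z where "Z x \<equiv> x \<inter> x0"

lemma dim_Y_Z: "vec.subspace x \<Longrightarrow> vec.dim (Y x) + vec.dim (Z x) = vec.dim x + vec.dim x0"
  using dim_ssum_inter[OF _ x0_subspace] by simp

lemma subspace_Y: "vec.subspace x \<Longrightarrow> vec.subspace (Y x)"
  using subspace_ssum[OF _ x0_subspace] .

lemma subspace_Z: "vec.subspace x \<Longrightarrow> vec.subspace (Z x)"
  using vec.subspace_inter[OF _ x0_subspace] .

lemma subset_Y: "x \<subseteq> Y x"
  using ssum_subset_left[OF x0_subspace] .

lemma x0_subset_Y: "vec.subspace x \<Longrightarrow> x0 \<subseteq> Y x"
  using ssum_subset_right .

lemma Y_least: "vec.subspace C \<Longrightarrow> x \<subseteq> C \<Longrightarrow> x0 \<subseteq> C \<Longrightarrow> Y x \<subseteq> C"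
  using ssum_least .

lemma Y_mono: "x \<subseteq> x' \<Longrightarrow> Y x \<subseteq> Y x'"
  using ssum_mono by blast

lemma dim_Z_le: "vec.subspace a \<Longrightarrow> vec.dim (Z a) \<le> vec.dim a" by (rule vec.dim_subset) blast

lemma dim_Z_le_x0: "vec.dim (Z a) \<le> vec.dim x0" by (rule vec.dim_subset) blast

lemma lower_cover_same_Z:
  assumes a: "vec.subspace a" and b: "vec.subspace b" and c: "cov b a" and z: "Z b = Z a"
  shows "cov (Y b) (Y a)" "b = a \<inter> Y b"
proof -
  have ba: "b \<subseteq> a" "vec.dim b + 1 = vec.dim a" using c unfolding cov_def by auto
  have "Y b \<subseteq> Y a" using Y_mono[OF ba(1)] .
  moreover have "vec.dim (Y b) + 1 = vec.dim (Y a)"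
    using dim_Y_Z[OF a] dim_Y_Z[OF b] arg_cong[OF z, of vec.dim] ba(2) by linarith
  ultimately show "cov (Y b) (Y a)" unfolding cov_def by simp
  have ne: "a \<inter> Y b \<noteq> a"
  proof
    assume "a \<inter> Y b = a"
    then have "Y a \<subseteq> Y b" using Y_least[OF subspace_Y[OF b] _ x0_subset_Y[OF b]] by blast
    then have "vec.dim (Y a) \<le> vec.dim (Y b)" by (rule vec.dim_subset)
    then show False using \<open>vec.dim (Y b) + 1 = vec.dim (Y a)\<close> by simp
  qed
  have "vec.dim (a \<inter> Y b) < vec.dim a" using dim_psubset[OF vec.subspace_inter[OF a subspace_Y[OF b]] a _ ne] by blast
  then have dle: "vec.dim (a \<inter> Y b) \<le> vec.dim b" using ba(2) by simp
  have "b \<subseteq> a \<inter> Y b" using ba(1) subset_Y by blast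
  moreover note dle
  ultimately show "b = a \<inter> Y b" by (rule vec.subspace_dim_equal[OF b vec.subspace_inter[OF a subspace_Y[OF b]]])
qed

lemma lower_cover_inter:
  assumes a: "vec.subspace a" and y: "vec.subspace y" "x0 \<subseteq> y" and c: "cov y (Y a)"
  shows "vec.subspace (a \<inter> y)" "cov (a \<inter> y) a" "Z (a \<inter> y) = Z a" "Y (a \<inter> y) = y"
proof -
  have yY: "y \<subseteq> Y a" "vec.dim y + 1 = vec.dim (Y a)" using c unfolding cov_def by auto
  show sb: "vec.subspace (a \<inter> y)" using vec.subspace_inter[OF a y(1)] .
  show zz: "Z (a \<inter> y) = Z a" using y(2) by blast
  have s1: "ssum a y \<subseteq> Y a" using ssum_least[OF subspace_Y[OF a] subset_Y yY(1)] .
  have s2: "y \<subseteq> ssum a y" using ssum_subset_right[OF a] .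
  have s3: "ssum a y \<noteq> y"
  proof
    assume "ssum a y = y"
    then have "a \<subseteq> y" using ssum_subset_left[OF y(1), of a] by simp
    then have "Y a \<subseteq> y" using Y_least[OF y(1) _ y(2)] by blast
    then have "vec.dim (Y a) \<le> vec.dim y" by (rule vec.dim_subset)
    then show False using yY(2) by simp
  qed
  have "vec.dim y < vec.dim (ssum a y)" using dim_psubset[OF y(1) subspace_ssum[OF a y(1)] s2 s3[symmetric]] .
  moreover have "vec.dim (ssum a y) \<le> vec.dim (Y a)" using vec.dim_subset[OF s1] .
  moreover have "vec.dim (ssum a y) + vec.dim (a \<inter> y) = vec.dim a + vec.dim y" using dim_ssum_inter[OF a y(1)] .
  ultimately have d: "vec.dim (a \<inter> y) + 1 = vec.dim a" using yY(2) by linarith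
  show "cov (a \<inter> y) a" unfolding cov_def using d by auto
  have "Y (a \<inter> y) \<subseteq> y" using Y_least[OF y(1) _ y(2)] by blast
  moreover have "vec.dim y \<le> vec.dim (Y (a \<inter> y))" using dim_Y_Z[OF sb] dim_Y_Z[OF a] arg_cong[OF zz, of vec.dim] d yY(2) by linarith
  ultimately show "Y (a \<inter> y) = y" by (rule vec.subspace_dim_equal[OF subspace_Y[OF sb] y(1)])
qed

lemma lower_cover_same_Y:
  assumes a: "vec.subspace a" and b: "vec.subspace b" and c: "cov b a" and y: "Y b = Y a"
  shows "cov (Z b) (Z a)"
proof -
  have ba: "b \<subseteq> a" "vec.dim b + 1 = vec.dim a" using c unfolding cov_def by auto
  have "vec.dim (Z b) + 1 = vec.dim (Z a)" using dim_Y_Z[OF a] dim_Y_Z[OF b] arg_cong[OF y, of vec.dim] ba(2) by linarith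
  then show ?thesis unfolding cov_def using ba(1) by auto
qed

lemma lower_covers_same_Y_eq:
  assumes a: "vec.subspace a" and z: "vec.subspace z" "z \<subseteq> x0" and c: "cov z (Z a)"
  shows "{b. vec.subspace b \<and> cov b a \<and> Y b = Y a \<and> Z b = z} = {g\<in>hyperplanes z a. \<not> Z a \<subseteq> g}"
proof -
  have zz: "z \<subseteq> Z a" "vec.dim z + 1 = vec.dim (Z a)" using c unfolding cov_def by auto
  show ?thesis
  proof (intro set_eqI iffI)
    fix b assume "b \<in> {b. vec.subspace b \<and> cov b a \<and> Y b = Y a \<and> Z b = z}"
    then have b: "vec.subspace b" "cov b a" "Y b = Y a" "Z b = z" by auto
    have ba: "b \<subseteq> a" "vec.dim b + 1 = vec.dim a" using b(2) unfolding cov_def by auto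
    have "\<not> Z a \<subseteq> b"
    proof
      assume "Z a \<subseteq> b"
      then have "Z a \<subseteq> z" using b(4) by blast
      then have "vec.dim (Z a) \<le> vec.dim z" by (rule vec.dim_subset)
      then show False using zz(2) by simp
    qed
    then show "b \<in> {g\<in>hyperplanes z a. \<not> Z a \<subseteq> g}" unfolding hyperplanes_def using b ba by auto
  next
    fix g assume "g \<in> {g\<in>hyperplanes z a. \<not> Z a \<subseteq> g}"
    then have g: "vec.subspace g" "z \<subseteq> g" "g \<subseteq> a" "vec.dim g + 1 = vec.dim a" "\<not> Z a \<subseteq> g" unfolding hyperplanes_def by auto
    have zg: "Z g = g \<inter> Z a" using g(3) by blast
    have "z \<subseteq> g \<inter> Z a" using g(2) zz(1) by blast
    moreover have "vec.dim (g \<inter> Z a) \<le> vec.dim z"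
    proof -
      have "g \<inter> Z a \<noteq> Z a" using g(5) by blast
      then have "vec.dim (g \<inter> Z a) < vec.dim (Z a)" using dim_psubset[OF vec.subspace_inter[OF g(1) subspace_Z[OF a]] subspace_Z[OF a]] by blast
      then show ?thesis using zz(2) by simp
    qed
    ultimately have gz: "Z g = z" unfolding zg by (rule vec.subspace_dim_equal[OF z(1) vec.subspace_inter[OF g(1) subspace_Z[OF a]], symmetric])
    have "Y g \<subseteq> Y a" using Y_mono[OF g(3)] .
    moreover have "vec.dim (Y a) \<le> vec.dim (Y g)" using dim_Y_Z[OF a] dim_Y_Z[OF g(1)] arg_cong[OF gz, of vec.dim] zz(2) g(4) by linarith
    ultimately have "Y g = Y a" by (rule vec.subspace_dim_equal[OF subspace_Y[OF g(1)] subspace_Y[OF a]])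
    then show "g \<in> {b. vec.subspace b \<and> cov b a \<and> Y b = Y a \<and> Z b = z}" using g gz unfolding cov_def by auto
  qed
qed

lemma upper_cover_same_Z:
  assumes a: "vec.subspace a" and b: "vec.subspace b" and c: "cov a b" and z: "Z b = Z a"
  shows "cov (Y a) (Y b)"
proof -
  have ba: "a \<subseteq> b" "vec.dim a + 1 = vec.dim b" using c unfolding cov_def by auto
  have "vec.dim (Y a) + 1 = vec.dim (Y b)" using dim_Y_Z[OF a] dim_Y_Z[OF b] arg_cong[OF z, of vec.dim] ba(2) by linarith
  then show ?thesis unfolding cov_def using Y_mono[OF ba(1)] by auto
qed

lemma upper_covers_same_Z_eq:
  assumes a: "vec.subspace a" and y: "vec.subspace y" "x0 \<subseteq> y" and c: "cov (Y a) y"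
  shows "{b. vec.subspace b \<and> cov a b \<and> Z b = Z a \<and> Y b = y} = {w\<in>upper_covers a y. \<not> w \<subseteq> Y a}"
proof -
  have yy: "Y a \<subseteq> y" "vec.dim (Y a) + 1 = vec.dim y" using c unfolding cov_def by auto
  show ?thesis
  proof (intro set_eqI iffI)
    fix b assume "b \<in> {b. vec.subspace b \<and> cov a b \<and> Z b = Z a \<and> Y b = y}"
    then have b: "vec.subspace b" "cov a b" "Z b = Z a" "Y b = y" by auto
    have ab: "a \<subseteq> b" "vec.dim a + 1 = vec.dim b" using b(2) unfolding cov_def by auto
    have "\<not> b \<subseteq> Y a"
    proof
      assume "b \<subseteq> Y a"
      then have "Y b \<subseteq> Y a" using Y_least[OF subspace_Y[OF a] _ x0_subset_Y[OF a]] by blast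
      then have "vec.dim (Y b) \<le> vec.dim (Y a)" by (rule vec.dim_subset)
      then show False using yy(2) b(4) by simp
    qed
    moreover have "b \<subseteq> y" using b(4) subset_Y by blast
    ultimately show "b \<in> {w\<in>upper_covers a y. \<not> w \<subseteq> Y a}" unfolding upper_covers_def using b ab by auto
  next
    fix w assume "w \<in> {w\<in>upper_covers a y. \<not> w \<subseteq> Y a}"
    then have w: "vec.subspace w" "a \<subseteq> w" "w \<subseteq> y" "vec.dim w = vec.dim a + 1" "\<not> w \<subseteq> Y a" unfolding upper_covers_def by auto
    have s1: "Y a \<subseteq> Y w" using Y_mono[OF w(2)] .
    have s2: "Y w \<subseteq> y" using Y_least[OF y(1) w(3) y(2)] .
    have "Y a \<noteq> Y w" using w(5) subset_Y by blast
    then have "vec.dim (Y a) < vec.dim (Y w)" using dim_psubset[OF subspace_Y[OF a] subspace_Y[OF w(1)] s1] by blast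
    then have "vec.dim y \<le> vec.dim (Y w)" using yy(2) by simp
    then have yw: "Y w = y" by (rule vec.subspace_dim_equal[OF subspace_Y[OF w(1)] y(1) s2])
    have "Z a \<subseteq> Z w" using w(2) by blast
    moreover have "vec.dim (Z w) \<le> vec.dim (Z a)" using dim_Y_Z[OF a] dim_Y_Z[OF w(1)] arg_cong[OF yw, of vec.dim] yy(2) w(4) by linarith
    ultimately have "Z a = Z w" by (rule vec.subspace_dim_equal[OF subspace_Z[OF a] subspace_Z[OF w(1)]])
    then show "w \<in> {b. vec.subspace b \<and> cov a b \<and> Z b = Z a \<and> Y b = y}" using w yw unfolding cov_def by auto
  qed
qed

lemma upper_cover_same_Y:
  assumes a: "vec.subspace a" and b: "vec.subspace b" and c: "cov a b" and y: "Y b = Y a"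
  shows "cov (Z a) (Z b)"
proof -
  have ab: "a \<subseteq> b" "vec.dim a + 1 = vec.dim b" using c unfolding cov_def by auto
  have "vec.dim (Z a) + 1 = vec.dim (Z b)" using dim_Y_Z[OF a] dim_Y_Z[OF b] arg_cong[OF y, of vec.dim] ab(2) by linarith
  moreover have "Z a \<subseteq> Z b" using ab(1) by blast
  ultimately show ?thesis unfolding cov_def by auto
qed

lemma upper_covers_same_Y_eq:
  assumes a: "vec.subspace a" and z: "vec.subspace z" "z \<subseteq> x0" and c: "cov (Z a) z"
  shows "{b. vec.subspace b \<and> cov a b \<and> Y b = Y a \<and> Z b = z} = {ssum a z}"
proof -
  have zz: "Z a \<subseteq> z" "vec.dim (Z a) + 1 = vec.dim z" using c unfolding cov_def by auto
  let ?b = "ssum a z"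
  have sb: "vec.subspace ?b" using subspace_ssum[OF a z(1)] .
  have az: "a \<inter> z = Z a" using zz(1) z(2) by blast
  have db: "vec.dim ?b = vec.dim a + 1" using dim_ssum_inter[OF a z(1)] az zz(2) by simp
  have ab: "a \<subseteq> ?b" "z \<subseteq> ?b" using ssum_subset_left[OF z(1)] ssum_subset_right[OF a] by auto
  have "Y ?b \<subseteq> Y a" using Y_least[OF subspace_Y[OF a] _ x0_subset_Y[OF a]] ssum_least[OF subspace_Y[OF a] subset_Y] z(2) x0_subset_Y[OF a] by blast
  moreover have "Y a \<subseteq> Y ?b" using Y_mono[OF ab(1)] .
  ultimately have yb: "Y ?b = Y a" by blast
  have "z \<subseteq> Z ?b" using ab(2) z(2) by blast
  moreover have "vec.dim (Z ?b) \<le> vec.dim z" using dim_Y_Z[OF a] dim_Y_Z[OF sb] arg_cong[OF yb, of vec.dim] zz(2) db by linarith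
  ultimately have zb: "Z ?b = z" by (rule vec.subspace_dim_equal[OF z(1) subspace_Z[OF sb], symmetric])
  show ?thesis
  proof (intro set_eqI iffI)
    fix b assume "b \<in> {b. vec.subspace b \<and> cov a b \<and> Y b = Y a \<and> Z b = z}"
    then have b: "vec.subspace b" "cov a b" "Y b = Y a" "Z b = z" by auto
    have abb: "a \<subseteq> b" "vec.dim a + 1 = vec.dim b" using b(2) unfolding cov_def by auto
    have "?b \<subseteq> b" using ssum_least[OF b(1) abb(1)] b(4) by blast
    moreover have "vec.dim b \<le> vec.dim ?b" using db abb(2) by simp
    ultimately have "?b = b" by (rule vec.subspace_dim_equal[OF sb b(1)])
    then show "b \<in> {ssum a z}" by simp
  next
    fix b assume "b \<in> {ssum a z}"
    then show "b \<in> {b. vec.subspace b \<and> cov a b \<and> Y b = Y a \<and> Z b = z}"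
      using sb ab db yb zb unfolding cov_def by auto
  qed
qed

lemma card_lower_covers_same_Z:
  assumes a: "vec.subspace a"
  shows "card {b. vec.subspace b \<and> (cov b a \<and> Z b = Z a) \<and> y = Y b \<and> z = Z b}
       = (if z = Z a \<and> vec.subspace y \<and> x0 \<subseteq> y \<and> cov y (Y a) then 1 else 0)"
proof (cases "z = Z a \<and> vec.subspace y \<and> x0 \<subseteq> y \<and> cov y (Y a)")
  case True
  have "{b. vec.subspace b \<and> (cov b a \<and> Z b = Z a) \<and> y = Y b \<and> z = Z b} = {a \<inter> y}"
  proof (intro set_eqI iffI)
    fix b assume "b \<in> {b. vec.subspace b \<and> (cov b a \<and> Z b = Z a) \<and> y = Y b \<and> z = Z b}"
    then have b: "vec.subspace b" "cov b a" "Z b = Z a" "y = Y b" by auto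
    show "b \<in> {a \<inter> y}" using lower_cover_same_Z(2)[OF a b(1,2,3)] b(4) by simp
  next
    fix b assume "b \<in> {a \<inter> y}"
    then show "b \<in> {b. vec.subspace b \<and> (cov b a \<and> Z b = Z a) \<and> y = Y b \<and> z = Z b}"
      using lower_cover_inter[OF a] True by auto
  qed
  then show ?thesis using True by simp
next
  case False
  have e: "{b. vec.subspace b \<and> (cov b a \<and> Z b = Z a) \<and> y = Y b \<and> z = Z b} = {}"
  proof (rule ccontr)
    assume "{b. vec.subspace b \<and> (cov b a \<and> Z b = Z a) \<and> y = Y b \<and> z = Z b} \<noteq> {}"
    then obtain b where b: "vec.subspace b" "cov b a" "Z b = Z a" "y = Y b" "z = Z b" by blast
    have "cov y (Y a)" using lower_cover_same_Z(1)[OF a b(1,2,3)] b(4) by simp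
    then show False using False b subspace_Y[OF b(1)] x0_subset_Y[OF b(1)] by auto
  qed
  show ?thesis unfolding e using False by simp
qed

lemma card_lower_covers_same_Y:
  assumes a: "vec.subspace a"
  shows "card {b. vec.subspace b \<and> (cov b a \<and> Y b = Y a) \<and> y = Y b \<and> z = Z b}
       = (if y = Y a \<and> vec.subspace z \<and> z \<subseteq> x0 \<and> cov z (Z a) then CARD('f) ^ (vec.dim a - vec.dim (Z a)) else 0)"
proof (cases "y = Y a \<and> vec.subspace z \<and> z \<subseteq> x0 \<and> cov z (Z a)")
  case True
  have e: "{b. vec.subspace b \<and> (cov b a \<and> Y b = Y a) \<and> y = Y b \<and> z = Z b} = {b. vec.subspace b \<and> cov b a \<and> Y b = Y a \<and> Z b = z}"
    using True by auto
  have "card {g\<in>hyperplanes z a. \<not> Z a \<subseteq> g} = CARD('f) ^ (vec.dim a - vec.dim (Z a))"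
    by (rule card_hyperplanes_not_containing) (use True subspace_Z[OF a] a in \<open>auto simp: cov_def\<close>)
  then show ?thesis unfolding e lower_covers_same_Y_eq[OF a] using True by (simp add: lower_covers_same_Y_eq[OF a])
next
  case False
  have e: "{b. vec.subspace b \<and> (cov b a \<and> Y b = Y a) \<and> y = Y b \<and> z = Z b} = {}"
  proof (rule ccontr)
    assume "{b. vec.subspace b \<and> (cov b a \<and> Y b = Y a) \<and> y = Y b \<and> z = Z b} \<noteq> {}"
    then obtain b where b: "vec.subspace b" "cov b a" "Y b = Y a" "y = Y b" "z = Z b" by blast
    have "cov (Z b) (Z a)" using lower_cover_same_Y[OF a b(1,2,3)] .
    then show False using False b subspace_Z[OF b(1)] by auto
  qed
  show ?thesis unfolding e using False by simp
qed

lemma card_upper_covers_same_Z: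
  assumes a: "vec.subspace a"
  shows "card {b. vec.subspace b \<and> (cov a b \<and> Z b = Z a) \<and> y = Y b \<and> z = Z b}
       = (if z = Z a \<and> vec.subspace y \<and> x0 \<subseteq> y \<and> cov (Y a) y then CARD('f) ^ (vec.dim (Y a) - vec.dim a) else 0)"
proof (cases "z = Z a \<and> vec.subspace y \<and> x0 \<subseteq> y \<and> cov (Y a) y")
  case True
  have e: "{b. vec.subspace b \<and> (cov a b \<and> Z b = Z a) \<and> y = Y b \<and> z = Z b} = {b. vec.subspace b \<and> cov a b \<and> Z b = Z a \<and> Y b = y}"
    using True by auto
  have "card {w\<in>upper_covers a y. \<not> w \<subseteq> Y a} = CARD('f) ^ (vec.dim (Y a) - vec.dim a)"
    by (rule card_upper_covers_not_within) (use True subspace_Y[OF a] a subset_Y in \<open>auto simp: cov_def\<close>)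
  then show ?thesis unfolding e using True by (simp add: upper_covers_same_Z_eq[OF a])
next
  case False
  have e: "{b. vec.subspace b \<and> (cov a b \<and> Z b = Z a) \<and> y = Y b \<and> z = Z b} = {}"
  proof (rule ccontr)
    assume "{b. vec.subspace b \<and> (cov a b \<and> Z b = Z a) \<and> y = Y b \<and> z = Z b} \<noteq> {}"
    then obtain b where b: "vec.subspace b" "cov a b" "Z b = Z a" "y = Y b" "z = Z b" by blast
    have "cov (Y a) (Y b)" using upper_cover_same_Z[OF a b(1,2,3)] .
    then show False using False b subspace_Y[OF b(1)] x0_subset_Y[OF b(1)] by auto
  qed
  show ?thesis unfolding e using False by simp
qed

lemma card_upper_covers_same_Y:
  assumes a: "vec.subspace a"
  shows "card {b. vec.subspace b \<and> (cov a b \<and> Y b = Y a) \<and> y = Y b \<and> z = Z b}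
       = (if y = Y a \<and> vec.subspace z \<and> z \<subseteq> x0 \<and> cov (Z a) z then 1 else 0)"
proof (cases "y = Y a \<and> vec.subspace z \<and> z \<subseteq> x0 \<and> cov (Z a) z")
  case True
  have e: "{b. vec.subspace b \<and> (cov a b \<and> Y b = Y a) \<and> y = Y b \<and> z = Z b} = {b. vec.subspace b \<and> cov a b \<and> Y b = Y a \<and> Z b = z}"
    using True by auto
  show ?thesis unfolding e using True by (simp add: upper_covers_same_Y_eq[OF a])
next
  case False
  have e: "{b. vec.subspace b \<and> (cov a b \<and> Y b = Y a) \<and> y = Y b \<and> z = Z b} = {}"
  proof (rule ccontr)
    assume "{b. vec.subspace b \<and> (cov a b \<and> Y b = Y a) \<and> y = Y b \<and> z = Z b} \<noteq> {}"
    then obtain b where b: "vec.subspace b" "cov a b" "Y b = Y a" "y = Y b" "z = Z b" by blast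
    have "cov (Z a) (Z b)" using upper_cover_same_Y[OF a b(1,2,3)] .
    then show False using False b subspace_Z[OF b(1)] by auto
  qed
  show ?thesis unfolding e using False by simp
qed

abbreviation join_covers where "join_covers a \<equiv> upper_covers a (Y a)"

definition fibre where "fibre a = {b. vec.subspace b \<and> Y b = Y a \<and> Z b = Z a}"

lemma dim_fibre: "vec.subspace a \<Longrightarrow> b \<in> fibre a \<Longrightarrow> vec.dim b = vec.dim a"
proof -
  assume a: "vec.subspace a" and "b \<in> fibre a"
  then have b: "vec.subspace b" "Y b = Y a" "Z b = Z a" unfolding fibre_def by auto
  show "vec.dim b = vec.dim a" using dim_Y_Z[OF a] dim_Y_Z[OF b(1)] arg_cong[OF b(2), of vec.dim] arg_cong[OF b(3), of vec.dim] by linarith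
qed

lemma self_in_fibre: "vec.subspace a \<Longrightarrow> a \<in> fibre a" unfolding fibre_def by simp

lemma join_cover_Y_Z:
  assumes a: "vec.subspace a" and w: "w \<in> join_covers a"
  shows "Y w = Y a" "vec.dim (Z w) = vec.dim (Z a) + 1"
proof -
  have w': "vec.subspace w" "a \<subseteq> w" "w \<subseteq> Y a" "vec.dim w = vec.dim a + 1"
    using w unfolding upper_covers_def by auto
  have "Y w \<subseteq> Y a" using Y_least[OF subspace_Y[OF a] w'(3) x0_subset_Y[OF a]] .
  moreover have "Y a \<subseteq> Y w" using Y_mono[OF w'(2)] .
  ultimately show yw: "Y w = Y a" by blast
  show "vec.dim (Z w) = vec.dim (Z a) + 1"
    using dim_Y_Z[OF a] dim_Y_Z[OF w'(1)] arg_cong[OF yw, of vec.dim] w'(4) by linarith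
qed

lemma fibre_below_join_cover:
  assumes a: "vec.subspace a" and w: "w \<in> join_covers a"
  shows "{b\<in>fibre a. b \<subseteq> w} = {g\<in>hyperplanes (Z a) w. \<not> Z w \<subseteq> g}"
proof (intro set_eqI iffI)
  have w': "vec.subspace w" "w \<subseteq> Y a" "vec.dim w = vec.dim a + 1"
    using w unfolding upper_covers_def by auto
  note yw = join_cover_Y_Z[OF a w]
  {
    fix b assume "b \<in> {b\<in>fibre a. b \<subseteq> w}"
    then have b: "vec.subspace b" "Y b = Y a" "Z b = Z a" "b \<subseteq> w" unfolding fibre_def by auto
    have "vec.dim b = vec.dim a" using dim_fibre[OF a] b unfolding fibre_def by auto
    moreover have "\<not> Z w \<subseteq> b"
    proof
      assume "Z w \<subseteq> b"
      then have "Z w \<subseteq> Z a" using b(3) by blast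
      then have "vec.dim (Z w) \<le> vec.dim (Z a)" by (rule vec.dim_subset)
      then show False using yw(2) by simp
    qed
    moreover have "Z a \<subseteq> b" using b(3) by blast
    ultimately show "b \<in> {g\<in>hyperplanes (Z a) w. \<not> Z w \<subseteq> g}"
      unfolding hyperplanes_def using b w'(3) by auto
  next
    fix g assume "g \<in> {g\<in>hyperplanes (Z a) w. \<not> Z w \<subseteq> g}"
    then have g: "vec.subspace g" "Z a \<subseteq> g" "g \<subseteq> w" "vec.dim g + 1 = vec.dim w" "\<not> Z w \<subseteq> g"
      unfolding hyperplanes_def by auto
    have "Z g \<subseteq> Z w" "Z g \<noteq> Z w" using g(3,5) by blast+
    then have "vec.dim (Z g) < vec.dim (Z w)"
      using dim_psubset[OF subspace_Z[OF g(1)] subspace_Z[OF w'(1)]] by blast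
    then have "vec.dim (Z g) \<le> vec.dim (Z a)" using yw(2) by simp
    moreover have "Z a \<subseteq> Z g" using g(2) by blast
    ultimately have zg: "Z a = Z g"
      by (intro vec.subspace_dim_equal[OF subspace_Z[OF a] subspace_Z[OF g(1)]])
    have "Y g \<subseteq> Y a" using Y_mono[OF g(3)] yw(1) by blast
    moreover have "vec.dim (Y a) \<le> vec.dim (Y g)"
      using dim_Y_Z[OF a] dim_Y_Z[OF g(1)] arg_cong[OF zg, of vec.dim] g(4) w'(3) by linarith
    ultimately have "Y g = Y a" by (rule vec.subspace_dim_equal[OF subspace_Y[OF g(1)] subspace_Y[OF a]])
    then show "g \<in> {b\<in>fibre a. b \<subseteq> w}" unfolding fibre_def using g zg by auto
  }
qed

lemma card_fibre_below_join_cover: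
  assumes a: "vec.subspace a" and w: "w \<in> join_covers a"
  shows "card {b\<in>fibre a. b \<subseteq> w} = CARD('f) ^ (vec.dim a - vec.dim (Z a))"
proof -
  have w': "vec.subspace w" "a \<subseteq> w" "vec.dim w = vec.dim a + 1" using w unfolding upper_covers_def by auto
  have "card {b\<in>fibre a. b \<subseteq> w} = CARD('f) ^ (vec.dim w - vec.dim (Z w))"
    unfolding fibre_below_join_cover[OF a w]
    by (rule card_hyperplanes_not_containing)
      (use subspace_Z[OF a] subspace_Z[OF w'(1)] w' join_cover_Y_Z(2)[OF a w] in auto)
  then show ?thesis using join_cover_Y_Z(2)[OF a w] w'(3) by simp
qed

lemma join_cover_eq_ssum:
  assumes a: "vec.subspace a" and b: "b \<in> fibre a" "b \<noteq> a" and w: "w \<in> join_covers a" "b \<subseteq> w"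
  shows "w = ssum a b"
proof -
  have w': "vec.subspace w" "a \<subseteq> w" "w \<subseteq> Y a" "vec.dim w = vec.dim a + 1" using w unfolding upper_covers_def by auto
  have sb: "vec.subspace b" using b unfolding fibre_def by auto
  have s: "ssum a b \<subseteq> w" using ssum_least[OF w'(1) w'(2) w(2)] .
  have "ssum a b \<noteq> a"
  proof
    assume "ssum a b = a"
    then have "b \<subseteq> a" using ssum_subset_right[OF a, of b] by simp
    moreover have "vec.dim a \<le> vec.dim b" using dim_fibre[OF a b(1)] by simp
    ultimately have "b = a" by (rule vec.subspace_dim_equal[OF sb a])
    then show False using b(2) by simp
  qed
  then have "vec.dim a < vec.dim (ssum a b)" using dim_psubset[OF a subspace_ssum[OF a sb] ssum_subset_left[OF sb]] by auto
  then have "vec.dim w \<le> vec.dim (ssum a b)" using w'(4) by simp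
  then show ?thesis using vec.subspace_dim_equal[OF subspace_ssum[OF a sb] w'(1) s] by simp
qed

lemma ssum_in_join_covers:
  assumes a: "vec.subspace a" and b: "b \<in> fibre a" and d: "vec.dim (ssum a b) = vec.dim a + 1"
  shows "ssum a b \<in> join_covers a" "b \<noteq> a" "b \<subseteq> ssum a b"
proof -
  have b': "vec.subspace b" "Y b = Y a" using b unfolding fibre_def by auto
  have "ssum a b \<subseteq> Y a" using ssum_least[OF subspace_Y[OF a] subset_Y] subset_Y[of b] b'(2) by blast
  then show "ssum a b \<in> join_covers a" unfolding upper_covers_def
    using subspace_ssum[OF a b'(1)] ssum_subset_left[OF b'(1)] d by auto
  show "b \<noteq> a"
  proof
    assume "b = a"
    then have "ssum a b = a" using ssum_absorb[OF a a] by simp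
    then show False using d by simp
  qed
  show "b \<subseteq> ssum a b" using ssum_subset_right[OF a] .
qed

lemma join_covers_inter:
  assumes a: "vec.subspace a" and b: "b \<in> fibre a" "b \<noteq> a"
  shows "join_covers a \<inter> join_covers b
       = (if vec.dim (ssum a b) = vec.dim a + 1 then {ssum a b} else {})"
proof -
  have "join_covers b = {w. vec.subspace w \<and> b \<subseteq> w \<and> w \<subseteq> Y a \<and> vec.dim w = vec.dim a + 1}"
    using b(1) dim_fibre[OF a b(1)] unfolding fibre_def upper_covers_def by auto
  then have "join_covers a \<inter> join_covers b = {w \<in> join_covers a. b \<subseteq> w}"
    unfolding upper_covers_def by auto
  also have "\<dots> \<subseteq> {ssum a b}"
    using join_cover_eq_ssum[OF a b] by blast
  finally have sub: "join_covers a \<inter> join_covers b \<subseteq> {ssum a b}" .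
  show ?thesis
  proof (cases "vec.dim (ssum a b) = vec.dim a + 1")
    case True
    then have "ssum a b \<in> join_covers a \<inter> join_covers b"
      using ssum_in_join_covers[OF a b(1)] \<open>join_covers b = _\<close>
      unfolding upper_covers_def by auto
    then show ?thesis using sub True by auto
  next
    case False
    then have "ssum a b \<notin> join_covers a" unfolding upper_covers_def by auto
    then show ?thesis using sub False by auto
  qed
qed

text \<open>Each \<open>b \<noteq> a\<close> counted here lies in exactly one join cover of \<open>a\<close>, namely \<open>ssum a b\<close>.\<close>

lemma card_fibre_adjacent:
  assumes a: "vec.subspace a"
  shows "card {b\<in>fibre a. vec.dim (ssum a b) = vec.dim a + 1} = card (join_covers a) * (CARD('f) ^ (vec.dim a - vec.dim (Z a)) - 1)"
proof -
  let ?W = "join_covers a"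
  let ?A = "\<lambda>w. {b\<in>fibre a. b \<subseteq> w} - {a}"
  have eq: "{b\<in>fibre a. vec.dim (ssum a b) = vec.dim a + 1} = (\<Union>w\<in>?W. ?A w)"
  proof (intro set_eqI iffI)
    fix b assume "b \<in> {b\<in>fibre a. vec.dim (ssum a b) = vec.dim a + 1}"
    then have b: "b \<in> fibre a" "vec.dim (ssum a b) = vec.dim a + 1" by auto
    show "b \<in> (\<Union>w\<in>?W. ?A w)" using ssum_in_join_covers[OF a b] b(1) by blast
  next
    fix b assume "b \<in> (\<Union>w\<in>?W. ?A w)"
    then obtain w where w: "w \<in> ?W" "b \<in> fibre a" "b \<subseteq> w" "b \<noteq> a" by blast
    have "w = ssum a b" using join_cover_eq_ssum[OF a w(2,4,1,3)] .
    then have "vec.dim (ssum a b) = vec.dim a + 1" using w(1) unfolding upper_covers_def by auto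
    then show "b \<in> {b\<in>fibre a. vec.dim (ssum a b) = vec.dim a + 1}" using w(2) by auto
  qed
  have disjoint: "\<forall>w1\<in>?W. \<forall>w2\<in>?W. w1 \<noteq> w2 \<longrightarrow> ?A w1 \<inter> ?A w2 = {}"
  proof (intro ballI impI)
    fix w1 w2 assume w1: "w1 \<in> ?W" and w2: "w2 \<in> ?W" and ne: "w1 \<noteq> w2"
    show "?A w1 \<inter> ?A w2 = {}"
    proof (rule ccontr)
      assume "?A w1 \<inter> ?A w2 \<noteq> {}"
      then obtain b where b: "b \<in> fibre a" "b \<noteq> a" "b \<subseteq> w1" "b \<subseteq> w2" by blast
      have "w1 = ssum a b" using join_cover_eq_ssum[OF a b(1,2) w1 b(3)] .
      moreover have "w2 = ssum a b" using join_cover_eq_ssum[OF a b(1,2) w2 b(4)] .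
      ultimately show False using ne by simp
    qed
  qed
  have c: "\<And>w. w \<in> ?W \<Longrightarrow> card (?A w) = CARD('f) ^ (vec.dim a - vec.dim (Z a)) - 1"
  proof -
    fix w assume w: "w \<in> ?W"
    have "a \<in> {b\<in>fibre a. b \<subseteq> w}" using self_in_fibre[OF a] w unfolding upper_covers_def by auto
    then show "card (?A w) = CARD('f) ^ (vec.dim a - vec.dim (Z a)) - 1"
      using card_fibre_below_join_cover[OF a w] by (simp add: card_Diff_singleton)
  qed
  have "card (\<Union>w\<in>?W. ?A w) = (\<Sum>w\<in>?W. card (?A w))"
    by (rule card_UN_disjoint) (use disjoint in auto)
  also have "\<dots> = (\<Sum>w\<in>?W. CARD('f) ^ (vec.dim a - vec.dim (Z a)) - 1)" using c by (rule sum.cong[OF refl])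
  finally show ?thesis unfolding eq by simp
qed

lemma fibre_count_identity:
  assumes a: "vec.subspace a"
  shows "int (card {b\<in>fibre a. vec.dim (ssum a b) = vec.dim a + 1}) * (int CARD('f) - 1)
         + (int CARD('f) ^ (vec.dim a - vec.dim (Z a)) + int CARD('f) ^ (vec.dim (Y a) - vec.dim a) - 1)
       = int CARD('f) ^ (vec.dim (Y a) - vec.dim (Z a))"
proof -
  let ?Q = "int CARD('f)" and ?U = "int (card (join_covers a))"
  define m where "m = vec.dim a - vec.dim (Z a)"
  define n where "n = vec.dim (Y a) - vec.dim a"
  have mn: "vec.dim (Y a) - vec.dim (Z a) = m + n"
    unfolding m_def n_def using vec.dim_subset[OF subset_Y[of a]] vec.dim_subset[of "Z a" a] by auto
  have "CARD('f) ^ m \<ge> 1" using card_field_ge_2[where 'f='f] by simp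
  then have "int (card {b\<in>fibre a. vec.dim (ssum a b) = vec.dim a + 1}) * (?Q - 1)
      = (?U * (?Q - 1)) * (?Q ^ m - 1)"
    using card_fibre_adjacent[OF a] unfolding m_def[symmetric] by (simp add: of_nat_diff mult_ac)
  also have "\<dots> = (?Q ^ n - 1) * (?Q ^ m - 1)"
    using card_upper_covers[OF a subspace_Y[OF a] subset_Y] unfolding n_def by simp
  finally show ?thesis
    unfolding mn m_def[symmetric] n_def[symmetric] power_add by (simp add: algebra_simps)
qed

end

section \<open>The rank of \<open>\<tau>(x') - \<tau>(x)\<close>\<close>

locale complement_split = iota_split x0 for x0 :: "('f::{field,finite}^'n) set" +
  fixes x1 :: "('f^'n) set"
  assumes x1_subspace: "vec.subspace x1" and complement_inter: "x0 \<inter> x1 = {0}"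
    and complement_ssum: "ssum x0 x1 = UNIV"
begin

lemma proj0_mem: "proj0 x0 x1 t \<in> x0 \<and> t - proj0 x0 x1 t \<in> x1"
proof -
  have "t \<in> ssum x0 x1" using complement_ssum by simp
  then obtain p r where pr: "p \<in> x0" "r \<in> x1" "t = p + r" by (rule ssum_memE)
  have ex: "p \<in> x0 \<and> t - p \<in> x1" using pr by simp
  have un: "\<And>p'. p' \<in> x0 \<and> t - p' \<in> x1 \<Longrightarrow> p' = p"
  proof -
    fix p' assume h: "p' \<in> x0 \<and> t - p' \<in> x1"
    have "p' - p \<in> x0" using vec.subspace_diff[OF x0_subspace, of p' p] h pr(1) by simp
    moreover have "(t - p) - (t - p') \<in> x1" using vec.subspace_diff[OF x1_subspace, of "t - p" "t - p'"] h ex by simp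
    then have "p' - p \<in> x1" by simp
    ultimately have "p' - p \<in> x0 \<inter> x1" by blast
    then show "p' = p" using complement_inter by simp
  qed
  have "proj0 x0 x1 t = p" unfolding proj0_def by (rule the_equality[where P="\<lambda>a. a \<in> x0 \<and> t - a \<in> x1", OF ex un])
  then show ?thesis using ex by simp
qed

lemma proj0_diff:
  assumes "t - t' \<in> x0"
  shows "proj0 x0 x1 t - proj0 x0 x1 t' = t - t'"
proof -
  let ?p = "proj0 x0 x1 t" and ?p' = "proj0 x0 x1 t'"
  have "?p - ?p' \<in> x0" using vec.subspace_diff[OF x0_subspace, of ?p ?p'] proj0_mem[of t] proj0_mem[of t'] by simp
  with assms have a: "(t - t') - (?p - ?p') \<in> x0" by (rule vec.subspace_diff[OF x0_subspace])
  have eq: "(t - t') - (?p - ?p') = (t - ?p) - (t' - ?p')" by (simp add: algebra_simps)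
  have mem: "(t - ?p) - (t' - ?p') \<in> x1"
    using vec.subspace_diff[OF x1_subspace, of "t - ?p" "t' - ?p'"] proj0_mem[of t] proj0_mem[of t'] by simp
  have b: "(t - t') - (?p - ?p') \<in> x1" unfolding eq by (rule mem)
  have "(t - t') - (?p - ?p') \<in> x0 \<inter> x1" using a b by blast
  then show ?thesis using complement_inter by simp
qed

lemma tau_rep:
  assumes x: "vec.subspace x" and w: "w \<in> Y x"
  shows "(SOME u. u \<in> x \<and> u - w \<in> x0) \<in> x \<and> (SOME u. u \<in> x \<and> u - w \<in> x0) - w \<in> x0"
proof (rule someI_ex)
  obtain p r where pr: "p \<in> x" "r \<in> x0" "w = p + r" using w by (rule ssum_memE)
  have "p - w \<in> x0" using pr vec.subspace_neg[OF x0_subspace] by simp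
  then show "\<exists>u. u \<in> x \<and> u - w \<in> x0" using pr(1) by blast
qed

lemma tau_diff:
  assumes a: "vec.subspace a" and b: "vec.subspace b" and w: "w \<in> Y a" and yb: "Y b = Y a"
  shows "\<exists>u u'. u \<in> a \<and> u - w \<in> x0 \<and> u' \<in> b \<and> u' - w \<in> x0 \<and> tau x0 x1 b w - tau x0 x1 a w = u' - u"
proof -
  let ?u = "SOME u. u \<in> a \<and> u - w \<in> x0" and ?u' = "SOME u. u \<in> b \<and> u - w \<in> x0"
  have u: "?u \<in> a" "?u - w \<in> x0" using tau_rep[OF a w] by auto
  have u': "?u' \<in> b" "?u' - w \<in> x0" using tau_rep[OF b] w yb by auto
  have "(?u' - w) - (?u - w) \<in> x0" using u'(2) u(2) by (rule vec.subspace_diff[OF x0_subspace])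
  then have "?u' - ?u \<in> x0" by simp
  then have "tau x0 x1 b w - tau x0 x1 a w = ?u' - ?u" unfolding tau_def by (rule proj0_diff)
  then show ?thesis using u u' by blast
qed

lemma tau_image_subset:
  assumes a: "vec.subspace a" and b: "vec.subspace b" and yb: "Y b = Y a"
  shows "ssum ((\<lambda>w. tau x0 x1 b w - tau x0 x1 a w) ` Y a) (Z a) \<subseteq> ssum a b \<inter> x0"
proof
  fix t assume "t \<in> ssum ((\<lambda>w. tau x0 x1 b w - tau x0 x1 a w) ` Y a) (Z a)"
  then obtain w s where ws: "w \<in> Y a" "s \<in> Z a" "t = (tau x0 x1 b w - tau x0 x1 a w) + s"
    unfolding ssum_def by blast
  obtain u u' where uu: "u \<in> a" "u - w \<in> x0" "u' \<in> b" "u' - w \<in> x0"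
      "tau x0 x1 b w - tau x0 x1 a w = u' - u"
    using tau_diff[OF a b ws(1) yb] by blast
  have t: "t = (s - u) + u'" using ws(3) uu(5) by (simp add: algebra_simps)
  have "s - u \<in> a" using ws(2) uu(1) vec.subspace_diff[OF a] by blast
  then have "t \<in> ssum a b" unfolding t by (rule ssum_memI[OF _ uu(3)])
  moreover have "t \<in> x0"
  proof -
    have "(u' - w) - (u - w) \<in> x0" using uu(4) uu(2) by (rule vec.subspace_diff[OF x0_subspace])
    then have "u' - u \<in> x0" by simp
    moreover have "s \<in> x0" using ws(2) by blast
    ultimately have "(u' - u) + s \<in> x0" by (rule vec.subspace_add[OF x0_subspace])
    then show ?thesis using ws(3) uu(5) by simp
  qed
  ultimately show "t \<in> ssum a b \<inter> x0" by blast
qed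

lemma tau_image_supset:
  assumes a: "vec.subspace a" and b: "vec.subspace b" and yb: "Y b = Y a" and zb: "Z b = Z a"
  shows "ssum a b \<inter> x0 \<subseteq> ssum ((\<lambda>w. tau x0 x1 b w - tau x0 x1 a w) ` Y a) (Z a)"
proof
  fix t assume "t \<in> ssum a b \<inter> x0"
  then obtain p r where pr: "p \<in> a" "r \<in> b" "t = p + r" "t \<in> x0" unfolding ssum_def by blast
  let ?w = "- p"
  have w: "?w \<in> Y a" using subset_Y[of a] pr(1) vec.subspace_neg[OF a] by blast
  obtain u u' where uu: "u \<in> a" "u - ?w \<in> x0" "u' \<in> b" "u' - ?w \<in> x0"
      "tau x0 x1 b ?w - tau x0 x1 a ?w = u' - u"
    using tau_diff[OF a b w yb] by blast
  have "u + p \<in> a" using uu(1) pr(1) vec.subspace_add[OF a] by blast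
  moreover have "u + p \<in> x0" using uu(2) by simp
  ultimately have s1': "u + p \<in> Z a" by blast
  have eq: "u' - r = (u' - ?w) - t" using pr(3) by (simp add: algebra_simps)
  have mem: "(u' - ?w) - t \<in> x0" using uu(4) pr(4) by (rule vec.subspace_diff[OF x0_subspace])
  have "u' - r \<in> x0" unfolding eq by (rule mem)
  moreover have "u' - r \<in> b" using uu(3) pr(2) vec.subspace_diff[OF b] by blast
  ultimately have "u' - r \<in> Z a" using zb by blast
  then have s: "(u + p) - (u' - r) \<in> Z a" using s1' vec.subspace_diff[OF subspace_Z[OF a]] by blast
  have teq: "t = (tau x0 x1 b ?w - tau x0 x1 a ?w) + ((u + p) - (u' - r))"
    unfolding uu(5) pr(3) by (simp add: algebra_simps)
  show "t \<in> ssum ((\<lambda>w. tau x0 x1 b w - tau x0 x1 a w) ` Y a) (Z a)"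
    by (subst teq, rule ssum_memI[OF imageI[OF w] s])
qed

lemma tau_image:
  assumes "vec.subspace a" "vec.subspace b" "Y b = Y a" "Z b = Z a"
  shows "ssum ((\<lambda>w. tau x0 x1 b w - tau x0 x1 a w) ` Y a) (Z a) = ssum a b \<inter> x0"
  using tau_image_subset[OF assms(1-3)] tau_image_supset[OF assms] by (rule subset_antisym)

lemma rank_tau_diff_eq:
  assumes a: "vec.subspace a" and b: "vec.subspace b" and yb: "Y b = Y a" and zb: "Z b = Z a"
  shows "rank_tau_diff x0 x1 a b = vec.dim (ssum a b) - vec.dim a"
proof -
  have r: "rank_tau_diff x0 x1 a b = vec.dim (ssum a b \<inter> x0) - vec.dim (Z a)"
    unfolding rank_tau_diff_def tau_image[OF assms] ..
  have sab: "vec.subspace (ssum a b)" using subspace_ssum[OF a b] .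
  have "Y (ssum a b) = Y a"
  proof
    have "ssum a b \<subseteq> Y a" using ssum_least[OF subspace_Y[OF a] subset_Y] subset_Y[of b] yb by blast
    then show "Y (ssum a b) \<subseteq> Y a" using Y_least[OF subspace_Y[OF a] _ x0_subset_Y[OF a]] by blast
    show "Y a \<subseteq> Y (ssum a b)" using Y_mono[OF ssum_subset_left[OF b]] .
  qed
  then have "vec.dim (Y a) + vec.dim (ssum a b \<inter> x0) = vec.dim (ssum a b) + vec.dim x0" using dim_Y_Z[OF sab] by simp
  moreover have "vec.dim a \<le> vec.dim (ssum a b)" using vec.dim_subset[OF ssum_subset_left[OF b]] .
  ultimately show ?thesis unfolding r using dim_Y_Z[OF a] by linarith
qed

end

section \<open>Matrices and the map \<open>\<iota>(x0)\<close>\<close>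

lemma mop_mop: "mop A (mop B v) = mop (\<lambda>a c. \<Sum>b\<in>UNIV. B a b * A b c) v"
proof
  fix y
  have "mop A (mop B v) y = (\<Sum>x\<in>UNIV. (\<Sum>w\<in>UNIV. v w * B w x) * A x y)" unfolding mop_def ..
  also have "\<dots> = (\<Sum>x\<in>UNIV. \<Sum>w\<in>UNIV. v w * (B w x * A x y))"
    by (simp add: sum_distrib_right mult.assoc)
  also have "\<dots> = (\<Sum>w\<in>UNIV. \<Sum>x\<in>UNIV. v w * (B w x * A x y))" by (rule sum.swap)
  also have "\<dots> = (\<Sum>w\<in>UNIV. v w * (\<Sum>x\<in>UNIV. B w x * A x y))" by (simp add: sum_distrib_left)
  finally show "mop A (mop B v) y = mop (\<lambda>a c. \<Sum>b\<in>UNIV. B a b * A b c) v y" unfolding mop_def .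
qed

lemma scop_mop: "scop c (mop M) = mop (\<lambda>a b. c * M a b)"
  unfolding scop_def mop_def by (simp add: sum_distrib_left mult.left_commute)

lemma mat_mult_diagm_right:
  fixes d :: "('f::{field,finite}^'n) set \<Rightarrow> complex"
  shows "(\<lambda>a c. \<Sum>b\<in>UNIV. B a b * diagm d b c) = (\<lambda>a c. B a c * (if c \<in> Lsub then d c else 0))"
proof (intro ext)
  fix a c
  have "(\<Sum>b\<in>UNIV. B a b * diagm d b c) = (\<Sum>b\<in>UNIV. if b = c then B a c * (if c \<in> Lsub then d c else 0) else 0)"
    unfolding diagm_def by (rule sum.cong) auto
  also have "\<dots> = B a c * (if c \<in> Lsub then d c else 0)" by (subst sum.delta) simp_all
  finally show "(\<Sum>b\<in>UNIV. B a b * diagm d b c) = B a c * (if c \<in> Lsub then d c else 0)" .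
qed

lemma mat_mult_diagm_left:
  fixes d :: "('f::{field,finite}^'n) set \<Rightarrow> complex"
  shows "(\<lambda>a c. \<Sum>b\<in>UNIV. diagm d a b * A b c) = (\<lambda>a c. (if a \<in> Lsub then d a else 0) * A a c)"
proof (intro ext)
  fix a c
  have "(\<Sum>b\<in>UNIV. diagm d a b * A b c) = (\<Sum>b\<in>UNIV. if b = a then (if a \<in> Lsub then d a else 0) * A a c else 0)"
    unfolding diagm_def by (rule sum.cong) auto
  also have "\<dots> = (if a \<in> Lsub then d a else 0) * A a c" by (subst sum.delta) simp_all
  finally show "(\<Sum>b\<in>UNIV. diagm d a b * A b c) = (if a \<in> Lsub then d a else 0) * A a c" .
qed

lemma mop_diagm_comp:
  fixes d :: "('f::{field,finite}^'n) set \<Rightarrow> complex"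
  shows "mop (diagm d) \<circ> mop B = mop (\<lambda>a c. B a c * (if c \<in> Lsub then d c else 0))"
  by (rule ext) (simp only: comp_def mop_mop mat_mult_diagm_right)

lemma mop_comp_diagm:
  fixes d :: "('f::{field,finite}^'n) set \<Rightarrow> complex"
  shows "mop A \<circ> mop (diagm d) = mop (\<lambda>a c. (if a \<in> Lsub then d a else 0) * A a c)"
  by (rule ext) (simp only: comp_def mop_mop mat_mult_diagm_left)

lemma sum_indicator: "finite S \<Longrightarrow> (\<Sum>b\<in>S. if P b then (1::complex) else 0) = of_nat (card {b\<in>S. P b})"
  by (simp add: sum.inter_filter[symmetric])

lemma mop_in_Vspace: "(\<And>a b. b \<notin> Lsub \<Longrightarrow> M a b = 0) \<Longrightarrow> mop M v \<in> Vspace"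
  unfolding Vspace_def mop_def by simp

lemma mop_zero_col:
  "(\<And>a. M a y = 0) \<Longrightarrow> mop M v y = 0"
  unfolding mop_def by simp

text \<open>Extending \<open>mop M\<close> by the identity outside \<open>Lsub\<close> gives an endomorphism of a
  finite-dimensional space, so injectivity on \<open>Vspace\<close> yields surjectivity onto \<open>Vspace\<close>.\<close>

definition extend_mop ::
    "(('f::{field,finite}^'n) set \<Rightarrow> ('f^'n) set \<Rightarrow> complex) \<Rightarrow> complex^(('f^'n) set) \<Rightarrow> complex^(('f^'n) set)"
  where "extend_mop M x = (\<chi> y. if y \<in> Lsub then mop M (vec_nth x) y else x $ y)"

lemma extend_mop_linear: "linear (extend_mop M)"
proof (rule linearI)
  show "extend_mop M (x + y) = extend_mop M x + extend_mop M y" for x y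
    unfolding extend_mop_def mop_def by (simp add: vec_eq_iff sum.distrib distrib_right)
  show "extend_mop M (r *\<^sub>R x) = r *\<^sub>R extend_mop M x" for r x
    unfolding extend_mop_def mop_def by (simp add: vec_eq_iff scaleR_sum_right mult_scaleR_left)
qed

lemma extend_mop_inj:
  assumes zero_col: "\<And>a b. b \<notin> Lsub \<Longrightarrow> M a b = 0"
    and kernel: "\<And>v. v \<in> Vspace \<Longrightarrow> mop M v = (\<lambda>_. 0) \<Longrightarrow> v = (\<lambda>_. 0)"
  shows "inj (extend_mop M)"
proof -
  have "x = 0" if x: "extend_mop M x = 0" for x
  proof -
    have coord: "(if y \<in> Lsub then mop M (vec_nth x) y else x $ y) = 0" for y
      using arg_cong[OF x, of "\<lambda>z. z $ y"] by (simp add: extend_mop_def)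
    then have "x $ y = 0" if "y \<notin> Lsub" for y using coord[of y] that by simp
    then have "vec_nth x \<in> Vspace" unfolding Vspace_def by blast
    moreover have "mop M (vec_nth x) y = 0" for y
      by (cases "y \<in> Lsub") (use coord[of y] mop_zero_col[of M y] zero_col in auto)
    then have "mop M (vec_nth x) = (\<lambda>_. 0)" by blast
    ultimately have "vec_nth x = (\<lambda>_. 0)" by (rule kernel)
    then show "x = 0" by (simp add: vec_eq_iff)
  qed
  then show ?thesis using linear_injective_0[OF extend_mop_linear] by blast
qed

lemma mop_onto_Vspace:
  assumes zero_col: "\<And>a b. b \<notin> Lsub \<Longrightarrow> M a b = 0"
    and kernel: "\<And>v. v \<in> Vspace \<Longrightarrow> mop M v = (\<lambda>_. 0) \<Longrightarrow> v = (\<lambda>_. 0)"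
    and w: "w \<in> Vspace"
  shows "\<exists>u\<in>Vspace. mop M u = w"
proof -
  have "surj (extend_mop M)"
    using extend_mop_linear extend_mop_inj[OF zero_col kernel] by (rule linear_inj_imp_surj)
  then obtain x where x: "extend_mop M x = vec_lambda w" by (metis surjD)
  have coord: "(if y \<in> Lsub then mop M (vec_nth x) y else x $ y) = w y" for y
    using arg_cong[OF x, of "\<lambda>z. z $ y"] by (simp add: extend_mop_def)
  have "x $ y = 0" if "y \<notin> Lsub" for y
    using coord[of y] w that unfolding Vspace_def by simp
  then have "vec_nth x \<in> Vspace" unfolding Vspace_def by blast
  moreover have "mop M (vec_nth x) y = w y" for y
    by (cases "y \<in> Lsub") (use coord[of y] mop_zero_col[of M y] zero_col w in \<open>auto simp: Vspace_def\<close>)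
  then have "mop M (vec_nth x) = w" by blast
  ultimately show ?thesis by blast
qed

lemma iota_add: "iota x0 (\<lambda>y. f y + g y) = (\<lambda>p. iota x0 f p + iota x0 g p)"
  unfolding iota_def by (auto simp: sum.distrib distrib_right)

lemma iota_scal: "iota x0 (\<lambda>y. c * f y) = (\<lambda>p. c * iota x0 f p)"
  unfolding iota_def by (auto simp: sum_distrib_left mult.assoc)

definition q_of :: "'f::finite itself \<Rightarrow> complex" where
  "q_of _ = complex_of_real (sqrt (real CARD('f)))"

context iota_split
begin

lemma q_nonzero: "q_of TYPE('f) \<noteq> 0" unfolding q_of_def using card_field_ge_2[where 'f='f] by simp

lemma q_squared: "q_of TYPE('f) ^ 2 = of_nat CARD('f)"
proof -
  have "(sqrt (real CARD('f)))^2 = real CARD('f)" by simp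
  then have "complex_of_real ((sqrt (real CARD('f)))^2) = of_nat CARD('f)" by simp
  then show ?thesis unfolding q_of_def by (simp only: of_real_power)
qed

lemma q_powi_even: "q_of TYPE('f) powi (2 * int k) = of_nat (CARD('f) ^ k)"
proof -
  have "q_of TYPE('f) powi (2 * int k) = q_of TYPE('f) powi (int (2 * k))" by simp
  also have "\<dots> = q_of TYPE('f) ^ (2 * k)" by (simp only: power_int_of_nat)
  also have "\<dots> = (q_of TYPE('f) ^ 2) ^ k" by (simp add: power_mult)
  finally show ?thesis using q_squared by simp
qed

lemma q_powi_add: "q_of TYPE('f) powi i * q_of TYPE('f) powi j = q_of TYPE('f) powi (i + j)"
  using power_int_add[of "q_of TYPE('f)" i j] q_nonzero by simp

lemma q_powi_sum_zero: "i + j + k = 0 \<Longrightarrow> q_of TYPE('f) powi i * q_of TYPE('f) powi j * q_of TYPE('f) powi k = 1"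
  by (simp add: q_powi_add)

lemma q_powi_sum_one: "i + j + k = 1 \<Longrightarrow> q_of TYPE('f) powi i * q_of TYPE('f) powi j * q_of TYPE('f) powi k = q_of TYPE('f)"
  by (simp add: q_powi_add)

lemma card_power_eq_q_powi: "(of_nat (CARD('f) ^ m) :: complex) = q_of TYPE('f) powi (2 * int m)"
  using q_powi_even by simp

text \<open>\<open>iota_col M a y z\<close> is the coefficient of \<open>(y, z)\<close> in \<open>\<iota>(x0)\<close> of row \<open>a\<close> of \<open>M\<close>.\<close>

definition iota_col :: "(('f^'n) set \<Rightarrow> ('f^'n) set \<Rightarrow> complex) \<Rightarrow> ('f^'n) set \<Rightarrow> ('f^'n) set \<Rightarrow> ('f^'n) set \<Rightarrow> complex" where
  "iota_col M a y z = (\<Sum>b\<in>Lsub. M a b * (if y = Y b \<and> z = Z b then 1 else 0))"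

lemma iota_mop:
  assumes v: "v \<in> Vspace"
  shows "iota x0 (mop M v) (y, z) = (\<Sum>a\<in>Lsub. v a * iota_col M a y z)"
proof -
  have "iota x0 (mop M v) (y, z) = (\<Sum>b\<in>Lsub. (\<Sum>a\<in>UNIV. v a * M a b) * (if y = Y b \<and> z = Z b then 1 else 0))"
    unfolding iota_def mop_def by simp
  also have "\<dots> = (\<Sum>b\<in>Lsub. (\<Sum>a\<in>Lsub. v a * M a b) * (if y = Y b \<and> z = Z b then 1 else 0))"
  proof (rule sum.cong[OF refl])
    fix b
    have "(\<Sum>a\<in>UNIV. v a * M a b) = (\<Sum>a\<in>Lsub. v a * M a b)"
      by (rule sum.mono_neutral_right) (use v in \<open>auto simp: Vspace_def\<close>)
    then show "(\<Sum>a\<in>UNIV. v a * M a b) * (if y = Y b \<and> z = Z b then 1 else 0)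
        = (\<Sum>a\<in>Lsub. v a * M a b) * (if y = Y b \<and> z = Z b then 1 else 0)" by simp
  qed
  also have "\<dots> = (\<Sum>b\<in>Lsub. \<Sum>a\<in>Lsub. v a * (M a b * (if y = Y b \<and> z = Z b then 1 else 0)))"
    by (simp add: sum_distrib_right mult.assoc)
  also have "\<dots> = (\<Sum>a\<in>Lsub. \<Sum>b\<in>Lsub. v a * (M a b * (if y = Y b \<and> z = Z b then 1 else 0)))"
    by (rule sum.swap)
  also have "\<dots> = (\<Sum>a\<in>Lsub. v a * iota_col M a y z)"
    unfolding iota_col_def by (simp add: sum_distrib_left)
  finally show ?thesis .
qed

lemma tens_act_TL_iota:
  "tens_act M1 M2 (TL u) (iota x0 v) (y, z) = (\<Sum>a\<in>Lsub. v a * ((if z = Z a then 1 else 0) * M1 u (Y a) y))"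
proof -
  have "tens_act M1 M2 (TL u) (iota x0 v) (y, z)
      = (\<Sum>y'\<in>UNIV. (\<Sum>a\<in>Lsub. v a * (if y' = Y a \<and> z = Z a then 1 else 0)) * M1 u y' y)"
    unfolding iota_def by simp
  also have "\<dots> = (\<Sum>y'\<in>UNIV. \<Sum>a\<in>Lsub. v a * ((if y' = Y a \<and> z = Z a then 1 else 0) * M1 u y' y))"
    by (simp add: sum_distrib_right mult.assoc)
  also have "\<dots> = (\<Sum>a\<in>Lsub. \<Sum>y'\<in>UNIV. v a * ((if y' = Y a \<and> z = Z a then 1 else 0) * M1 u y' y))"
    by (rule sum.swap)
  also have "\<dots> = (\<Sum>a\<in>Lsub. v a * ((if z = Z a then 1 else 0) * M1 u (Y a) y))"
  proof (rule sum.cong[OF refl])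
    fix a
    have "(\<Sum>y'\<in>UNIV. v a * ((if y' = Y a \<and> z = Z a then 1 else 0) * M1 u y' y))
        = (\<Sum>y'\<in>UNIV. if y' = Y a then v a * ((if z = Z a then 1 else 0) * M1 u (Y a) y) else 0)"
      by (rule sum.cong) auto
    then show "(\<Sum>y'\<in>UNIV. v a * ((if y' = Y a \<and> z = Z a then 1 else 0) * M1 u y' y))
        = v a * ((if z = Z a then 1 else 0) * M1 u (Y a) y)" by simp
  qed
  finally show ?thesis .
qed

lemma tens_act_TR_iota:
  "tens_act M1 M2 (TR u) (iota x0 v) (y, z) = (\<Sum>a\<in>Lsub. v a * ((if y = Y a then 1 else 0) * M2 u (Z a) z))"
proof -
  have "tens_act M1 M2 (TR u) (iota x0 v) (y, z)
      = (\<Sum>z'\<in>UNIV. (\<Sum>a\<in>Lsub. v a * (if y = Y a \<and> z' = Z a then 1 else 0)) * M2 u z' z)"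
    unfolding iota_def by simp
  also have "\<dots> = (\<Sum>z'\<in>UNIV. \<Sum>a\<in>Lsub. v a * ((if y = Y a \<and> z' = Z a then 1 else 0) * M2 u z' z))"
    by (simp add: sum_distrib_right mult.assoc)
  also have "\<dots> = (\<Sum>a\<in>Lsub. \<Sum>z'\<in>UNIV. v a * ((if y = Y a \<and> z' = Z a then 1 else 0) * M2 u z' z))"
    by (rule sum.swap)
  also have "\<dots> = (\<Sum>a\<in>Lsub. v a * ((if y = Y a then 1 else 0) * M2 u (Z a) z))"
  proof (rule sum.cong[OF refl])
    fix a
    have "(\<Sum>z'\<in>UNIV. v a * ((if y = Y a \<and> z' = Z a then 1 else 0) * M2 u z' z))
        = (\<Sum>z'\<in>UNIV. if z' = Z a then v a * ((if y = Y a then 1 else 0) * M2 u (Z a) z) else 0)"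
      by (rule sum.cong) auto
    then show "(\<Sum>z'\<in>UNIV. v a * ((if y = Y a \<and> z' = Z a then 1 else 0) * M2 u z' z))
        = v a * ((if y = Y a then 1 else 0) * M2 u (Z a) z)" by simp
  qed
  finally show ?thesis .
qed

lemma iota_mop_TL:
  assumes v: "v \<in> Vspace"
    and h: "\<And>a y z. a \<in> Lsub \<Longrightarrow> iota_col M a y z = (if z = Z a then 1 else 0) * M1 u (Y a) y"
  shows "iota x0 (mop M v) = tens_act M1 M2 (TL u) (iota x0 v)"
proof
  fix p :: "('f^'n) set \<times> ('f^'n) set"
  obtain y z where p: "p = (y, z)" by fastforce
  show "iota x0 (mop M v) p = tens_act M1 M2 (TL u) (iota x0 v) p"
    unfolding p iota_mop[OF v] tens_act_TL_iota by (rule sum.cong[OF refl]) (simp add: h)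
qed

lemma iota_mop_TR:
  assumes v: "v \<in> Vspace"
    and h: "\<And>a y z. a \<in> Lsub \<Longrightarrow> iota_col M a y z = (if y = Y a then 1 else 0) * M2 u (Z a) z"
  shows "iota x0 (mop M v) = tens_act M1 M2 (TR u) (iota x0 v)"
proof
  fix p :: "('f^'n) set \<times> ('f^'n) set"
  obtain y z where p: "p = (y, z)" by fastforce
  show "iota x0 (mop M v) p = tens_act M1 M2 (TR u) (iota x0 v) p"
    unfolding p iota_mop[OF v] tens_act_TR_iota by (rule sum.cong[OF refl]) (simp add: h)
qed

lemma iota_col_card:
  assumes a: "a \<in> Lsub" and M: "\<And>b. M a b = c * (if b \<in> Lsub \<and> P b then 1 else 0)"
  shows "iota_col M a y z = c * of_nat (card {b. vec.subspace b \<and> P b \<and> y = Y b \<and> z = Z b})"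
proof -
  have "iota_col M a y z = (\<Sum>b\<in>Lsub. c * (if P b \<and> y = Y b \<and> z = Z b then 1 else 0))"
    unfolding iota_col_def M by (rule sum.cong) auto
  also have "\<dots> = c * (\<Sum>b\<in>Lsub. if P b \<and> y = Y b \<and> z = Z b then 1 else 0)"
    by (simp add: sum_distrib_left)
  also have "\<dots> = c * of_nat (card {b\<in>Lsub. P b \<and> y = Y b \<and> z = Z b})"
    by (subst sum_indicator) simp_all
  finally show ?thesis unfolding Lsub_def by simp
qed

lemma iota_col_diagm:
  assumes a: "a \<in> Lsub"
  shows "iota_col (diagm d) a y z = d a * (if y = Y a \<and> z = Z a then 1 else 0)"
proof -
  have "iota_col (diagm d) a y z = (\<Sum>b\<in>Lsub. if b = a then d a * (if y = Y a \<and> z = Z a then 1 else 0) else 0)"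
    unfolding iota_col_def diagm_def by (rule sum.cong) (use a in auto)
  also have "\<dots> = d a * (if y = Y a \<and> z = Z a then 1 else 0)" using a by (subst sum.delta) simp_all
  finally show ?thesis .
qed

lemma iota_col_factor:
  assumes "\<And>b. b \<in> Lsub \<Longrightarrow> M a b \<noteq> 0 \<Longrightarrow> g b = g0"
  shows "iota_col (\<lambda>a b. M a b * g b) a y z = g0 * iota_col M a y z"
  unfolding iota_col_def sum_distrib_left
  by (rule sum.cong[OF refl]) (use assms in \<open>fastforce\<close>)

lemma iota_col_add:
  "iota_col (\<lambda>a b. c * A a b + B a b) a y z = c * iota_col A a y z + iota_col B a y z"
  unfolding iota_col_def by (simp add: sum.distrib sum_distrib_left algebra_simps)

lemma Lsub_iff: "x \<in> Lsub \<longleftrightarrow> vec.subspace x" unfolding Lsub_def by simp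

lemma Y_in_Lint: "vec.subspace a \<Longrightarrow> Y a \<in> Lint x0 UNIV"
  unfolding Lint_def using subspace_Y x0_subset_Y by auto

lemma Z_in_Lint: "vec.subspace a \<Longrightarrow> Z a \<in> Lint {0} x0"
  unfolding Lint_def using subspace_Z vec.subspace_0 x0_subspace by auto

lemma Lint_bottom_iff: "z \<in> Lint {0} x0 \<longleftrightarrow> vec.subspace z \<and> z \<subseteq> x0"
  unfolding Lint_def using vec.subspace_0 by auto

lemma Lint_top_iff: "y \<in> Lint x0 UNIV \<longleftrightarrow> vec.subspace y \<and> x0 \<subseteq> y"
  unfolding Lint_def by auto

end

section \<open>The generators \<open>E\<^sub>i\<close>, \<open>F\<^sub>i\<close>, \<open>K\<^sub>i\<^sup>\<plusminus>\<^sup>1\<close>\<close>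

context iota_split
begin

lemma Umat_E_left:
  assumes a: "vec.subspace a"
  shows "Umat (q_of TYPE('f)) 1 x0 UNIV UE (Y a) y
       = (if vec.subspace y \<and> x0 \<subseteq> y \<and> cov y (Y a) then q_of TYPE('f) powi (int (vec.dim x0) - Dim TYPE('f) TYPE('n)) else 0)"
  using Y_in_Lint[OF a] Lint_top_iff[of y] by (simp add: rdim_def Dim_def)

lemma Umat_F_left:
  assumes a: "vec.subspace a"
  shows "Umat (q_of TYPE('f)) 1 x0 UNIV UF (Y a) y = (if vec.subspace y \<and> x0 \<subseteq> y \<and> cov (Y a) y then q_of TYPE('f) else 0)"
  using Y_in_Lint[OF a] Lint_top_iff[of y] by simp

lemma Umat_E_right:
  assumes a: "vec.subspace a"
  shows "Umat (q_of TYPE('f)) (q_of TYPE('f) ^ vec.dim x0) {0} x0 UE (Z a) z = (if vec.subspace z \<and> z \<subseteq> x0 \<and> cov z (Z a) then 1 else 0)"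
proof -
  have "q_of TYPE('f) ^ vec.dim x0 * q_of TYPE('f) powi (- (int (vec.dim x0))) = 1"
    using q_nonzero by (simp add: power_int_minus field_simps)
  then show ?thesis using Z_in_Lint[OF a] Lint_bottom_iff[of z] by (simp add: rdim_def)
qed

lemma Umat_F_right:
  assumes a: "vec.subspace a"
  shows "Umat (q_of TYPE('f)) (q_of TYPE('f) ^ vec.dim x0) {0} x0 UF (Z a) z
       = (if vec.subspace z \<and> z \<subseteq> x0 \<and> cov (Z a) z then q_of TYPE('f) powi (1 - int (vec.dim x0)) else 0)"
proof -
  have "q_of TYPE('f) / q_of TYPE('f) ^ vec.dim x0 = q_of TYPE('f) powi (1 - int (vec.dim x0))"
    using q_nonzero by (simp add: power_int_diff)
  then show ?thesis using Z_in_Lint[OF a] Lint_bottom_iff[of z] by simp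
qed

lemma iota_col_E1:
  assumes a: "a \<in> Lsub"
  shows "iota_col (\<lambda>a b. q_of TYPE('f) powi (int (vec.dim x0) - Dim TYPE('f) TYPE('n)) * L1 x0 a b) a y z
       = (if z = Z a then 1 else 0) * Umat (q_of TYPE('f)) 1 x0 UNIV UE (Y a) y"
proof -
  let ?c = "q_of TYPE('f) powi (int (vec.dim x0) - Dim TYPE('f) TYPE('n))"
  have sa: "vec.subspace a" using a Lsub_iff by blast
  have "iota_col (\<lambda>a b. ?c * L1 x0 a b) a y z
      = ?c * of_nat (card {b. vec.subspace b \<and> (cov b a \<and> Z b = Z a) \<and> y = Y b \<and> z = Z b})"
    by (rule iota_col_card[OF a]) (use a in \<open>simp add: L1_def\<close>)
  also have "\<dots> = (if z = Z a \<and> vec.subspace y \<and> x0 \<subseteq> y \<and> cov y (Y a) then ?c else 0)"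
    unfolding card_lower_covers_same_Z[OF sa] by simp
  finally show ?thesis unfolding Umat_E_left[OF sa] by simp
qed

lemma iota_col_E2:
  assumes a: "a \<in> Lsub"
  shows "iota_col (\<lambda>a b. q_of TYPE('f) powi (int (vec.dim x0) - Dim TYPE('f) TYPE('n)) *
            (L2 x0 a b * (if b \<in> Lsub then q_of TYPE('f) powi e1 x0 b else 0))) a y z
       = (if y = Y a then 1 else 0) * Umat (q_of TYPE('f)) (q_of TYPE('f) ^ vec.dim x0) {0} x0 UE (Z a) z"
proof -
  let ?c = "q_of TYPE('f) powi (int (vec.dim x0) - Dim TYPE('f) TYPE('n))"
  let ?c' = "?c * q_of TYPE('f) powi e1 x0 a"
  have sa: "vec.subspace a" using a Lsub_iff by blast
  have "iota_col (\<lambda>a b. ?c * (L2 x0 a b * (if b \<in> Lsub then q_of TYPE('f) powi e1 x0 b else 0))) a y z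
      = ?c' * of_nat (card {b. vec.subspace b \<and> (cov b a \<and> Y b = Y a) \<and> y = Y b \<and> z = Z b})"
    by (rule iota_col_card[OF a]) (use a in \<open>auto simp: L2_def e1_def\<close>)
  also have "\<dots> = (if y = Y a \<and> vec.subspace z \<and> z \<subseteq> x0 \<and> cov z (Z a) then ?c' * of_nat (CARD('f) ^ (vec.dim a - vec.dim (Z a))) else 0)"
    unfolding card_lower_covers_same_Y[OF sa] by simp
  also have "?c' * of_nat (CARD('f) ^ (vec.dim a - vec.dim (Z a))) = 1"
    unfolding card_power_eq_q_powi mult.assoc[symmetric]
    by (rule q_powi_sum_zero) (use dim_Y_Z[OF sa] dim_Z_le[OF sa] in \<open>simp add: e1_def Dim_def of_nat_diff\<close>)
  finally show ?thesis unfolding Umat_E_right[OF sa] by simp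
qed

lemma iota_col_F1:
  assumes a: "a \<in> Lsub"
  shows "iota_col (\<lambda>a b. q_of TYPE('f) powi (1 - int (vec.dim x0)) *
            ((if a \<in> Lsub then q_of TYPE('f) powi (- e2 x0 a) else 0) * R1 x0 a b)) a y z
       = (if z = Z a then 1 else 0) * Umat (q_of TYPE('f)) 1 x0 UNIV UF (Y a) y"
proof -
  let ?c' = "q_of TYPE('f) powi (1 - int (vec.dim x0)) * q_of TYPE('f) powi (- e2 x0 a)"
  have sa: "vec.subspace a" using a Lsub_iff by blast
  have "iota_col (\<lambda>a b. q_of TYPE('f) powi (1 - int (vec.dim x0)) *
            ((if a \<in> Lsub then q_of TYPE('f) powi (- e2 x0 a) else 0) * R1 x0 a b)) a y z
      = ?c' * of_nat (card {b. vec.subspace b \<and> (cov a b \<and> Z b = Z a) \<and> y = Y b \<and> z = Z b})"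
    by (rule iota_col_card[OF a]) (use a in \<open>auto simp: R1_def\<close>)
  also have "\<dots> = (if z = Z a \<and> vec.subspace y \<and> x0 \<subseteq> y \<and> cov (Y a) y then ?c' * of_nat (CARD('f) ^ (vec.dim (Y a) - vec.dim a)) else 0)"
    unfolding card_upper_covers_same_Z[OF sa] by simp
  also have "?c' * of_nat (CARD('f) ^ (vec.dim (Y a) - vec.dim a)) = q_of TYPE('f)"
    unfolding card_power_eq_q_powi mult.assoc[symmetric]
    by (rule q_powi_sum_one) (use dim_Y_Z[OF sa] dim_Z_le_x0[of a] in \<open>simp add: e2_def of_nat_diff\<close>)
  finally show ?thesis unfolding Umat_F_left[OF sa] by simp
qed

lemma iota_col_F2:
  assumes a: "a \<in> Lsub"
  shows "iota_col (\<lambda>a b. q_of TYPE('f) powi (1 - int (vec.dim x0)) * R2 x0 a b) a y z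
       = (if y = Y a then 1 else 0) * Umat (q_of TYPE('f)) (q_of TYPE('f) ^ vec.dim x0) {0} x0 UF (Z a) z"
proof -
  have sa: "vec.subspace a" using a Lsub_iff by blast
  have "iota_col (\<lambda>a b. q_of TYPE('f) powi (1 - int (vec.dim x0)) * R2 x0 a b) a y z
      = q_of TYPE('f) powi (1 - int (vec.dim x0)) * of_nat (card {b. vec.subspace b \<and> (cov a b \<and> Y b = Y a) \<and> y = Y b \<and> z = Z b})"
    by (rule iota_col_card[OF a]) (use a in \<open>auto simp: R2_def\<close>)
  also have "\<dots> = (if y = Y a \<and> vec.subspace z \<and> z \<subseteq> x0 \<and> cov (Z a) z then q_of TYPE('f) powi (1 - int (vec.dim x0)) else 0)"
    unfolding card_upper_covers_same_Y[OF sa] by simp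
  finally show ?thesis unfolding Umat_F_right[OF sa] by simp
qed

lemma iota_col_K1:
  assumes a: "a \<in> Lsub"
  shows "iota_col (D1 (q_of TYPE('f)) x0) a y z = (if z = Z a then 1 else 0) * Umat (q_of TYPE('f)) 1 x0 UNIV UK (Y a) y"
proof -
  have sa: "vec.subspace a" using a Lsub_iff by blast
  show ?thesis unfolding D1_def iota_col_diagm[OF a] using Y_in_Lint[OF sa] by (auto simp: e1_def rdim_def)
qed

lemma iota_col_K1i:
  assumes a: "a \<in> Lsub"
  shows "iota_col (D1i (q_of TYPE('f)) x0) a y z = (if z = Z a then 1 else 0) * Umat (q_of TYPE('f)) 1 x0 UNIV UKi (Y a) y"
proof -
  have sa: "vec.subspace a" using a Lsub_iff by blast
  show ?thesis unfolding D1i_def iota_col_diagm[OF a] using Y_in_Lint[OF sa] by (auto simp: e1_def rdim_def)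
qed

lemma iota_col_K2:
  assumes a: "a \<in> Lsub"
  shows "iota_col (D2 (q_of TYPE('f)) x0) a y z = (if y = Y a then 1 else 0) * Umat (q_of TYPE('f)) (q_of TYPE('f) ^ vec.dim x0) {0} x0 UK (Z a) z"
proof -
  have sa: "vec.subspace a" using a Lsub_iff by blast
  show ?thesis unfolding D2_def iota_col_diagm[OF a] using Z_in_Lint[OF sa] by (auto simp: e2_def rdim_def)
qed

lemma iota_col_K2i:
  assumes a: "a \<in> Lsub"
  shows "iota_col (D2i (q_of TYPE('f)) x0) a y z = (if y = Y a then 1 else 0) * Umat (q_of TYPE('f)) (q_of TYPE('f) ^ vec.dim x0) {0} x0 UKi (Z a) z"
proof -
  have sa: "vec.subspace a" using a Lsub_iff by blast
  show ?thesis unfolding D2i_def iota_col_diagm[OF a] using Z_in_Lint[OF sa] by (auto simp: e2_def rdim_def)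
qed

end

context complement_split
begin

abbreviation "Wrep \<equiv> Wop (q_of TYPE('f)) x0 x1"

abbreviation "Trep \<equiv> tens_act (Umat (q_of TYPE('f)) 1 x0 UNIV) (Umat (q_of TYPE('f)) (q_of TYPE('f) ^ vec.dim x0) {0} x0)"

lemma intertwines_WE1: "v \<in> Vspace \<Longrightarrow> Wrep WE1 v \<in> Vspace \<and> iota x0 (Wrep WE1 v) = act Trep (flat_gen WE1) (iota x0 v)"
  unfolding Wop.simps flat_gen.simps act.simps scop_mop
  by (intro conjI mop_in_Vspace iota_mop_TL iota_col_E1) (auto simp: L1_def)

lemma intertwines_WE2: "v \<in> Vspace \<Longrightarrow> Wrep WE2 v \<in> Vspace \<and> iota x0 (Wrep WE2 v) = act Trep (flat_gen WE2) (iota x0 v)"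
  unfolding Wop.simps flat_gen.simps act.simps D1_def mop_diagm_comp scop_mop
  by (intro conjI mop_in_Vspace iota_mop_TR iota_col_E2) (auto simp: L2_def)

lemma intertwines_WF1: "v \<in> Vspace \<Longrightarrow> Wrep WF1 v \<in> Vspace \<and> iota x0 (Wrep WF1 v) = act Trep (flat_gen WF1) (iota x0 v)"
  unfolding Wop.simps flat_gen.simps act.simps D2i_def mop_comp_diagm scop_mop
  by (intro conjI mop_in_Vspace iota_mop_TL iota_col_F1) (auto simp: R1_def)

lemma intertwines_WF2: "v \<in> Vspace \<Longrightarrow> Wrep WF2 v \<in> Vspace \<and> iota x0 (Wrep WF2 v) = act Trep (flat_gen WF2) (iota x0 v)"
  unfolding Wop.simps flat_gen.simps act.simps scop_mop
  by (intro conjI mop_in_Vspace iota_mop_TR iota_col_F2) (auto simp: R2_def)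

lemma intertwines_WK1: "v \<in> Vspace \<Longrightarrow> Wrep WK1 v \<in> Vspace \<and> iota x0 (Wrep WK1 v) = act Trep (flat_gen WK1) (iota x0 v)"
  unfolding Wop.simps flat_gen.simps act.simps
  by (intro conjI mop_in_Vspace iota_mop_TL iota_col_K1) (auto simp: D1_def diagm_def)

lemma intertwines_WK1i: "v \<in> Vspace \<Longrightarrow> Wrep WK1i v \<in> Vspace \<and> iota x0 (Wrep WK1i v) = act Trep (flat_gen WK1i) (iota x0 v)"
  unfolding Wop.simps flat_gen.simps act.simps
  by (intro conjI mop_in_Vspace iota_mop_TL iota_col_K1i) (auto simp: D1i_def diagm_def)

lemma intertwines_WK2: "v \<in> Vspace \<Longrightarrow> Wrep WK2 v \<in> Vspace \<and> iota x0 (Wrep WK2 v) = act Trep (flat_gen WK2) (iota x0 v)"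
  unfolding Wop.simps flat_gen.simps act.simps
  by (intro conjI mop_in_Vspace iota_mop_TR iota_col_K2) (auto simp: D2_def diagm_def)

lemma intertwines_WK2i: "v \<in> Vspace \<Longrightarrow> Wrep WK2i v \<in> Vspace \<and> iota x0 (Wrep WK2i v) = act Trep (flat_gen WK2i) (iota x0 v)"
  unfolding Wop.simps flat_gen.simps act.simps
  by (intro conjI mop_in_Vspace iota_mop_TR iota_col_K2i) (auto simp: D2i_def diagm_def)

end

section \<open>The central element \<open>I\<close>\<close>

context iota_split
begin

lemma D4_entry:
  assumes a: "vec.subspace a"
  shows "(real (card a) + real (card x0)) / real (card (Z a)) - 1
       = real CARD('f) ^ (vec.dim a - vec.dim (Z a)) + real CARD('f) ^ (vec.dim (Y a) - vec.dim a) - 1"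
proof -
  let ?Q = "real CARD('f)"
  have "real (card a) = ?Q ^ vec.dim (Z a) * ?Q ^ (vec.dim a - vec.dim (Z a))"
    using card_subspace[OF a] dim_Z_le[OF a] by (simp add: power_add[symmetric])
  moreover have "real (card x0) = ?Q ^ vec.dim (Z a) * ?Q ^ (vec.dim (Y a) - vec.dim a)"
  proof -
    have "vec.dim x0 = vec.dim (Z a) + (vec.dim (Y a) - vec.dim a)"
      using dim_Y_Z[OF a] dim_Z_le[OF a] vec.dim_subset[OF subset_Y[of a]] by linarith
    then show ?thesis using card_subspace[OF x0_subspace] by (simp add: power_add[symmetric])
  qed
  moreover have "real (card (Z a)) = ?Q ^ vec.dim (Z a)"
    using card_subspace[OF subspace_Z[OF a]] by simp
  moreover have "?Q ^ vec.dim (Z a) \<noteq> 0" using card_field_ge_2[where 'f='f] by simp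
  ultimately show ?thesis by (simp add: field_simps)
qed

end

context complement_split
begin

definition T_mat where "T_mat = (\<lambda>a b. (q_of TYPE('f) ^ 2 - 1) * D3 x0 x1 a b + D4 x0 a b)"

lemma Top_eq_mop: "Top (q_of TYPE('f)) x0 x1 = mop T_mat"
proof (intro ext)
  fix v y
  have "mop T_mat v y = (\<Sum>x\<in>UNIV. (q_of TYPE('f) ^ 2 - 1) * (v x * D3 x0 x1 x y) + v x * D4 x0 x y)"
    unfolding mop_def T_mat_def by (rule sum.cong[OF refl]) (simp add: algebra_simps)
  also have "\<dots> = (q_of TYPE('f) ^ 2 - 1) * mop (D3 x0 x1) v y + mop (D4 x0) v y"
    unfolding mop_def sum.distrib sum_distrib_left ..
  finally show "Top (q_of TYPE('f)) x0 x1 v y = mop T_mat v y" unfolding Top_def by simp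
qed

lemma T_mat_nonzero: "a \<in> Lsub \<Longrightarrow> T_mat a b \<noteq> 0 \<Longrightarrow> b \<in> fibre a"
  unfolding T_mat_def D3_def D4_def diagm_def fibre_def Lsub_def by (auto split: if_splits)

lemma T_mat_zero_col: "b \<notin> Lsub \<Longrightarrow> T_mat a b = 0"
  unfolding T_mat_def D3_def D4_def diagm_def by auto

lemma iota_col_D3:
  assumes a: "a \<in> Lsub"
  shows "iota_col (D3 x0 x1) a y z = (if y = Y a \<and> z = Z a then of_nat (card {b\<in>fibre a. vec.dim (ssum a b) = vec.dim a + 1}) else 0)"
proof -
  have sa: "vec.subspace a" using a Lsub_iff by blast
  have "iota_col (D3 x0 x1) a y z
      = 1 * of_nat (card {b. vec.subspace b \<and> (Y b = Y a \<and> Z b = Z a \<and> rank_tau_diff x0 x1 a b = 1) \<and> y = Y b \<and> z = Z b})"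
    by (rule iota_col_card[OF a]) (use a in \<open>auto simp: D3_def\<close>)
  also have "{b. vec.subspace b \<and> (Y b = Y a \<and> Z b = Z a \<and> rank_tau_diff x0 x1 a b = 1) \<and> y = Y b \<and> z = Z b}
      = (if y = Y a \<and> z = Z a then {b\<in>fibre a. vec.dim (ssum a b) = vec.dim a + 1} else {})"
  proof (cases "y = Y a \<and> z = Z a")
    case True
    have "\<And>b. vec.subspace b \<Longrightarrow> Y b = Y a \<Longrightarrow> Z b = Z a \<Longrightarrow> (rank_tau_diff x0 x1 a b = 1) = (vec.dim (ssum a b) = vec.dim a + 1)"
    proof -
      fix b assume b: "vec.subspace b" "Y b = Y a" "Z b = Z a"
      have "vec.dim a \<le> vec.dim (ssum a b)" using vec.dim_subset[OF ssum_subset_left[OF b(1)]] .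
      then show "(rank_tau_diff x0 x1 a b = 1) = (vec.dim (ssum a b) = vec.dim a + 1)"
        unfolding rank_tau_diff_eq[OF sa b] by linarith
    qed
    then show ?thesis using True unfolding fibre_def by auto
  next
    case False
    then show ?thesis by auto
  qed
  finally show ?thesis by simp
qed

lemma iota_col_T:
  assumes a: "a \<in> Lsub"
  shows "iota_col T_mat a y z = (if y = Y a \<and> z = Z a then of_nat (CARD('f) ^ (vec.dim (Y a) - vec.dim (Z a))) else 0)"
proof -
  have sa: "vec.subspace a" using a Lsub_iff by blast
  let ?N = "card {b\<in>fibre a. vec.dim (ssum a b) = vec.dim a + 1}"
  have "iota_col T_mat a y z = (q_of TYPE('f) ^ 2 - 1) * iota_col (D3 x0 x1) a y z + iota_col (D4 x0) a y z"
    unfolding T_mat_def by (rule iota_col_add)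
  also have "\<dots> = (if y = Y a \<and> z = Z a then (of_nat CARD('f) - 1) * of_nat ?N
        + (of_nat (CARD('f) ^ (vec.dim a - vec.dim (Z a))) + of_nat (CARD('f) ^ (vec.dim (Y a) - vec.dim a)) - 1) else 0)"
    using arg_cong[OF D4_entry[OF sa], of complex_of_real]
    unfolding iota_col_D3[OF a] D4_def iota_col_diagm[OF a] q_squared by simp
  also have "(of_nat CARD('f) - 1) * of_nat ?N
        + (of_nat (CARD('f) ^ (vec.dim a - vec.dim (Z a))) + of_nat (CARD('f) ^ (vec.dim (Y a) - vec.dim a)) - 1)
      = (of_nat (CARD('f) ^ (vec.dim (Y a) - vec.dim (Z a))) :: complex)"
  proof -
    have "int ?N * (int CARD('f) - 1) + (int CARD('f) ^ (vec.dim a - vec.dim (Z a)) + int CARD('f) ^ (vec.dim (Y a) - vec.dim a) - 1)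
        = int CARD('f) ^ (vec.dim (Y a) - vec.dim (Z a))" using fibre_count_identity[OF sa] .
    then have "(of_int (int ?N * (int CARD('f) - 1) + (int CARD('f) ^ (vec.dim a - vec.dim (Z a)) + int CARD('f) ^ (vec.dim (Y a) - vec.dim a) - 1)) :: complex)
        = of_int (int CARD('f) ^ (vec.dim (Y a) - vec.dim (Z a)))" by simp
    then show ?thesis by (simp add: algebra_simps)
  qed
  finally show ?thesis by simp
qed

definition I_weight where "I_weight b = q_of TYPE('f) powi (- Dim TYPE('f) TYPE('n)) *
   ((if b \<in> Lsub then q_of TYPE('f) powi (- e2 x0 b) else 0) * (if b \<in> Lsub then q_of TYPE('f) powi e1 x0 b else 0))"

lemma Wrep_I_eq: "Wrep WI = mop (\<lambda>a b. T_mat a b * I_weight b)"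
proof -
  have "Wrep WI = scop (q_of TYPE('f) powi (- Dim TYPE('f) TYPE('n)))
      (mop (D1 (q_of TYPE('f)) x0) \<circ> (mop (D2i (q_of TYPE('f)) x0) \<circ> mop T_mat))"
    unfolding Wop.simps Top_eq_mop by (simp add: o_assoc)
  also have "\<dots> = mop (\<lambda>a b. T_mat a b * I_weight b)"
    unfolding D1_def D2i_def mop_diagm_comp scop_mop I_weight_def
    by (rule arg_cong[where f=mop]) (auto simp: fun_eq_iff algebra_simps)
  finally show ?thesis .
qed

lemma iota_col_I:
  assumes a: "a \<in> Lsub"
  shows "iota_col (\<lambda>a b. T_mat a b * I_weight b) a y z = (if y = Y a \<and> z = Z a then 1 else 0)"
proof -
  have sa: "vec.subspace a" using a Lsub_iff by blast
  have "iota_col (\<lambda>a b. T_mat a b * I_weight b) a y z = I_weight a * iota_col T_mat a y z"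
  proof (rule iota_col_factor)
    fix b assume "b \<in> Lsub" "T_mat a b \<noteq> 0"
    then have "b \<in> fibre a" using T_mat_nonzero[OF a] by blast
    then show "I_weight b = I_weight a" unfolding I_weight_def fibre_def e1_def e2_def Lsub_iff using sa by auto
  qed
  also have "\<dots> = (if y = Y a \<and> z = Z a then I_weight a * of_nat (CARD('f) ^ (vec.dim (Y a) - vec.dim (Z a))) else 0)"
    unfolding iota_col_T[OF a] by simp
  also have "I_weight a * of_nat (CARD('f) ^ (vec.dim (Y a) - vec.dim (Z a))) = 1"
  proof -
    have "I_weight a * of_nat (CARD('f) ^ (vec.dim (Y a) - vec.dim (Z a)))
        = q_of TYPE('f) powi (- Dim TYPE('f) TYPE('n)) * q_of TYPE('f) powi (- e2 x0 a + e1 x0 a)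
          * q_of TYPE('f) powi (2 * int (vec.dim (Y a) - vec.dim (Z a)))"
      unfolding I_weight_def card_power_eq_q_powi using a by (simp add: q_powi_add mult.assoc)
    also have "\<dots> = 1"
      by (rule q_powi_sum_zero) (use dim_Y_Z[OF sa] dim_Z_le[OF sa] vec.dim_subset[OF subset_Y[of a]] in \<open>simp add: e1_def e2_def Dim_def of_nat_diff\<close>)
    finally show ?thesis .
  qed
  finally show ?thesis .
qed

lemma intertwines_WI: "v \<in> Vspace \<Longrightarrow> Wrep WI v \<in> Vspace \<and> iota x0 (Wrep WI v) = act Trep (flat_gen WI) (iota x0 v)"
proof
  assume v: "v \<in> Vspace"
  show "Wrep WI v \<in> Vspace" unfolding Wrep_I_eq by (rule mop_in_Vspace) (simp add: T_mat_zero_col)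
  show "iota x0 (Wrep WI v) = act Trep (flat_gen WI) (iota x0 v)"
  proof
    fix p :: "('f^'n) set \<times> ('f^'n) set"
    obtain y z where p: "p = (y, z)" by fastforce
    have "iota x0 (Wrep WI v) p = (\<Sum>a\<in>Lsub. v a * (if y = Y a \<and> z = Z a then 1 else 0))"
      unfolding p Wrep_I_eq iota_mop[OF v] by (rule sum.cong[OF refl]) (simp add: iota_col_I)
    also have "\<dots> = iota x0 v p" unfolding p iota_def by simp
    finally show "iota x0 (Wrep WI v) p = act Trep (flat_gen WI) (iota x0 v) p" by simp
  qed
qed

end

section \<open>Invertibility of \<open>(q\<^sup>2 - 1) D\<^sub>3 + D\<^sub>4\<close> and the element \<open>I\<^sup>-\<^sup>1\<close>\<close>

lemma sum_grouped_products_nonneg: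
  fixes f :: "'a \<Rightarrow> real"
  assumes "finite S"
  shows "0 \<le> (\<Sum>b\<in>S. \<Sum>a\<in>S. of_bool (k b = k a) * f b * f a)"
proof -
  define G where "G c = (\<Sum>a\<in>{a\<in>S. k a = c}. f a)" for c
  have "(\<Sum>b\<in>S. \<Sum>a\<in>S. of_bool (k b = k a) * f b * f a) = (\<Sum>b\<in>S. f b * G (k b))"
    unfolding G_def using assms
    by (intro sum.cong refl) (simp add: sum_distrib_left mult.assoc Int_def conj_commute eq_commute)
  also have "\<dots> = (\<Sum>c\<in>k ` S. \<Sum>b\<in>{b\<in>S. k b = c}. f b * G (k b))"
    using sum.image_gen[OF assms, of "\<lambda>b. f b * G (k b)" k] by simp
  also have "\<dots> = (\<Sum>c\<in>k ` S. G c * G c)"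
    unfolding G_def by (intro sum.cong refl) (simp add: sum_distrib_right)
  also have "\<dots> \<ge> 0" by (intro sum_nonneg) simp
  finally show ?thesis .
qed

lemma quadratic_form_ge_sum_squares:
  fixes M :: "'a \<Rightarrow> 'a \<Rightarrow> real" and h :: "'w \<Rightarrow> 'a \<Rightarrow> real"
  assumes S: "finite S" and W: "finite W" and c: "0 \<le> c" and d: "\<And>a. a \<in> S \<Longrightarrow> 1 \<le> d a"
    and M: "\<And>a b. a \<in> S \<Longrightarrow> b \<in> S \<Longrightarrow>
      M a b = c * (\<Sum>w\<in>W. of_bool (k b = k a) * h w b * h w a) + of_bool (a = b) * d a"
  shows "(\<Sum>a\<in>S. (u a)\<^sup>2) \<le> (\<Sum>b\<in>S. u b * (\<Sum>a\<in>S. u a * M a b))"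
proof -
  let ?F = "\<lambda>w b a. of_bool (k b = k a) * (u b * h w b) * (u a * h w a)"
  have summand: "u b * (u a * M a b) = c * (\<Sum>w\<in>W. ?F w b a) + of_bool (a = b) * (d b * (u b)\<^sup>2)"
    if "a \<in> S" "b \<in> S" for a b
    using that by (cases "a = b") (simp_all add: M sum_distrib_left algebra_simps power2_eq_square)
  have "(\<Sum>b\<in>S. u b * (\<Sum>a\<in>S. u a * M a b)) = (\<Sum>b\<in>S. \<Sum>a\<in>S. u b * (u a * M a b))"
    by (simp add: sum_distrib_left)
  also have "\<dots> = c * (\<Sum>b\<in>S. \<Sum>a\<in>S. \<Sum>w\<in>W. ?F w b a) + (\<Sum>b\<in>S. d b * (u b)\<^sup>2)"
    using S by (simp add: summand sum.distrib sum_distrib_left)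
  also have "(\<Sum>b\<in>S. \<Sum>a\<in>S. \<Sum>w\<in>W. ?F w b a) = (\<Sum>w\<in>W. \<Sum>b\<in>S. \<Sum>a\<in>S. ?F w b a)"
    by (subst sum.swap) (simp add: sum.swap[of _ W S])
  finally have eq: "(\<Sum>b\<in>S. u b * (\<Sum>a\<in>S. u a * M a b))
      = c * (\<Sum>w\<in>W. \<Sum>b\<in>S. \<Sum>a\<in>S. ?F w b a) + (\<Sum>b\<in>S. d b * (u b)\<^sup>2)" .
  have "0 \<le> (\<Sum>b\<in>S. \<Sum>a\<in>S. ?F w b a)" for w
    using sum_grouped_products_nonneg[OF S, of k "\<lambda>a. u a * h w a"] by (simp add: mult.assoc)
  then have "0 \<le> (\<Sum>w\<in>W. \<Sum>b\<in>S. \<Sum>a\<in>S. ?F w b a)" by (simp add: sum_nonneg)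
  moreover have "(\<Sum>b\<in>S. (u b)\<^sup>2) \<le> (\<Sum>b\<in>S. d b * (u b)\<^sup>2)"
    using d by (intro sum_mono) (simp add: mult_right_mono[of 1 _ "(u _)\<^sup>2", simplified])
  ultimately show ?thesis unfolding eq using c by (simp add: add_increasing)
qed

context complement_split
begin

definition T_real where "T_real a b = (real CARD('f) - 1) * (if a \<in> Lsub \<and> b \<in> Lsub \<and> Y b = Y a \<and> Z b = Z a \<and> rank_tau_diff x0 x1 a b = 1 then 1 else 0)
   + (if a \<in> Lsub \<and> b = a then (real (card a) + real (card x0)) / real (card (Z a)) - 1 else 0)"

lemma T_mat_of_real: "T_mat a b = of_real (T_real a b)"
  unfolding T_mat_def T_real_def D3_def D4_def diagm_def q_squared by simp

text \<open>Within a fibre, \<open>rank (\<tau> b - \<tau> a) = 1\<close> exactly when \<open>a\<close> and \<open>b\<close> have a (necessarily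
  unique) common upper cover inside \<open>Y a\<close>; so \<open>T_real\<close> is a Gram matrix of these covers plus a
  diagonal \<open>\<ge> 1\<close>.\<close>

lemma T_real_eq:
  assumes a: "a \<in> Lsub" and b: "b \<in> Lsub"
  shows "T_real a b = (real CARD('f) - 1) * (\<Sum>w\<in>UNIV.
      of_bool ((Y b, Z b) = (Y a, Z a)) * of_bool (w \<in> join_covers b) * of_bool (w \<in> join_covers a))
    + of_bool (a = b) * real CARD('f) ^ (vec.dim a - vec.dim (Z a))"
proof -
  have sa: "vec.subspace a" and sb: "vec.subspace b" using a b Lsub_iff by auto
  have fibre_iff: "b \<in> fibre a \<longleftrightarrow> (Y b, Z b) = (Y a, Z a)" unfolding fibre_def using sb by auto
  have sum_eq: "(\<Sum>w\<in>UNIV. of_bool ((Y b, Z b) = (Y a, Z a)) * of_bool (w \<in> join_covers b)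
        * of_bool (w \<in> join_covers a))
      = of_bool (b \<in> fibre a) * real (card (join_covers a \<inter> join_covers b))"
    unfolding fibre_iff by (simp add: Int_def conj_commute)
  consider "b \<notin> fibre a" | "b = a" | "b \<in> fibre a" "b \<noteq> a" by blast
  then show ?thesis
  proof cases
    case 1
    then have "a \<noteq> b" using self_in_fibre[OF sa] by auto
    then show ?thesis using 1 sb unfolding sum_eq T_real_def fibre_def by auto
  next
    case 2
    have "rank_tau_diff x0 x1 a a = 0"
      using rank_tau_diff_eq[OF sa sa refl refl] ssum_absorb[OF sa sa] by simp
    moreover have "real (card (join_covers a)) * (real CARD('f) - 1)
        = real CARD('f) ^ (vec.dim (Y a) - vec.dim a) - 1"
      using arg_cong[OF card_upper_covers[OF sa subspace_Y[OF sa] subset_Y], of real_of_int] by simp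
    ultimately show ?thesis
      using 2 a self_in_fibre[OF sa] unfolding sum_eq T_real_def D4_entry[OF sa]
      by (simp add: algebra_simps)
  next
    case 3
    then have "Y b = Y a" "Z b = Z a" unfolding fibre_def by auto
    then have "rank_tau_diff x0 x1 a b = 1 \<longleftrightarrow> vec.dim (ssum a b) = vec.dim a + 1"
      using rank_tau_diff_eq[OF sa sb] vec.dim_subset[OF ssum_subset_left[OF sb]] by auto
    then show ?thesis
      using 3 a b unfolding sum_eq T_real_def join_covers_inter[OF sa 3] fibre_def by auto
  qed
qed

lemma T_real_quadratic_ge:
  "(\<Sum>a\<in>Lsub. (u a)\<^sup>2) \<le> (\<Sum>b\<in>Lsub. u b * (\<Sum>a\<in>Lsub. u a * T_real a b))"
  by (rule quadratic_form_ge_sum_squares[where k = "\<lambda>x. (Y x, Z x)" and W = UNIV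
        and h = "\<lambda>w x. of_bool (w \<in> join_covers x)"])
    (use card_field_ge_2[where 'f='f] in \<open>simp_all add: T_real_eq mult.assoc\<close>)

lemma T_real_kernel:
  assumes h: "\<And>b. b \<in> Lsub \<Longrightarrow> (\<Sum>a\<in>Lsub. u a * T_real a b) = 0" and a: "a \<in> Lsub"
  shows "u a = 0"
proof -
  have "(\<Sum>a\<in>Lsub. (u a)\<^sup>2) \<le> 0" using T_real_quadratic_ge[of u] h by simp
  then have "(\<Sum>a\<in>Lsub. (u a)\<^sup>2) = 0" by (simp add: order_antisym sum_nonneg)
  then show ?thesis using a by (subst (asm) sum_nonneg_eq_0_iff) auto
qed

lemma mop_T_mat_Lsub:
  assumes v: "v \<in> Vspace"
  shows "mop T_mat v b = (\<Sum>a\<in>Lsub. v a * of_real (T_real a b))"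
proof -
  have "mop T_mat v b = (\<Sum>a\<in>UNIV. v a * of_real (T_real a b))" unfolding mop_def T_mat_of_real ..
  also have "\<dots> = (\<Sum>a\<in>Lsub. v a * of_real (T_real a b))"
    by (rule sum.mono_neutral_right) (use v in \<open>auto simp: Vspace_def\<close>)
  finally show ?thesis .
qed

lemma T_mat_kernel:
  assumes v: "v \<in> Vspace" and z: "mop T_mat v = (\<lambda>_. 0)"
  shows "v = (\<lambda>_. 0)"
proof -
  have parts: "(\<Sum>a\<in>Lsub. Re (v a) * T_real a b) = 0" "(\<Sum>a\<in>Lsub. Im (v a) * T_real a b) = 0"
    if "b \<in> Lsub" for b
    using arg_cong[OF z, of "\<lambda>f. Re (f b)"] arg_cong[OF z, of "\<lambda>f. Im (f b)"]
    unfolding mop_T_mat_Lsub[OF v] by (simp_all add: Re_sum Im_sum)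
  have "v a = 0" if "a \<in> Lsub" for a
    using T_real_kernel[of "\<lambda>a. Re (v a)", OF parts(1) that] T_real_kernel[of "\<lambda>a. Im (v a)", OF parts(2) that]
    by (simp add: complex_eq_iff)
  then show ?thesis using v unfolding Vspace_def by auto
qed

lemma Top_inv:
  assumes "w \<in> Vspace"
  shows "inv_into Vspace (Top (q_of TYPE('f)) x0 x1) w \<in> Vspace"
    "Top (q_of TYPE('f)) x0 x1 (inv_into Vspace (Top (q_of TYPE('f)) x0 x1) w) = w"
proof -
  have "w \<in> Top (q_of TYPE('f)) x0 x1 ` Vspace"
    using mop_onto_Vspace[of T_mat, OF T_mat_zero_col T_mat_kernel assms] unfolding Top_eq_mop by blast
  then show "inv_into Vspace (Top (q_of TYPE('f)) x0 x1) w \<in> Vspace"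
    "Top (q_of TYPE('f)) x0 x1 (inv_into Vspace (Top (q_of TYPE('f)) x0 x1) w) = w"
    by (rule inv_into_into, rule f_inv_into_f)
qed

definition Ii_weight where "Ii_weight x = q_of TYPE('f) powi (Dim TYPE('f) TYPE('n)) * (q_of TYPE('f) powi e2 x0 x * q_of TYPE('f) powi (- e1 x0 x))"

lemma Ii_weight_eq:
  assumes a: "a \<in> Lsub"
  shows "Ii_weight a = of_nat (CARD('f) ^ (vec.dim (Y a) - vec.dim (Z a)))"
proof -
  have sa: "vec.subspace a" using a Lsub_iff by blast
  have "Ii_weight a = q_of TYPE('f) powi (Dim TYPE('f) TYPE('n) + (e2 x0 a - e1 x0 a))"
    unfolding Ii_weight_def by (simp add: q_powi_add mult.assoc)
  also have "Dim TYPE('f) TYPE('n) + (e2 x0 a - e1 x0 a) = 2 * int (vec.dim (Y a) - vec.dim (Z a))"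
    using dim_Y_Z[OF sa] dim_Z_le[OF sa] vec.dim_subset[OF subset_Y[of a]]
    by (simp add: e1_def e2_def Dim_def of_nat_diff)
  finally show ?thesis unfolding card_power_eq_q_powi .
qed

lemma Wrep_Ii_eq: "Wrep WIi v = mop (diagm Ii_weight) (inv_into Vspace (Top (q_of TYPE('f)) x0 x1) v)"
proof -
  have "Wrep WIi v = scop (q_of TYPE('f) powi (Dim TYPE('f) TYPE('n)))
      (mop (D1i (q_of TYPE('f)) x0) \<circ> mop (D2 (q_of TYPE('f)) x0)) (inv_into Vspace (Top (q_of TYPE('f)) x0 x1) v)"
    unfolding Wop.simps scop_def by simp
  also have "scop (q_of TYPE('f) powi (Dim TYPE('f) TYPE('n))) (mop (D1i (q_of TYPE('f)) x0) \<circ> mop (D2 (q_of TYPE('f)) x0))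
      = mop (diagm Ii_weight)"
    unfolding D1i_def D2_def mop_diagm_comp scop_mop Ii_weight_def
    by (rule arg_cong[where f=mop]) (auto simp: fun_eq_iff diagm_def)
  finally show ?thesis .
qed

lemma intertwines_WIi: "v \<in> Vspace \<Longrightarrow> Wrep WIi v \<in> Vspace \<and> iota x0 (Wrep WIi v) = act Trep (flat_gen WIi) (iota x0 v)"
proof
  assume v: "v \<in> Vspace"
  let ?u = "inv_into Vspace (Top (q_of TYPE('f)) x0 x1) v"
  have u: "?u \<in> Vspace" "mop T_mat ?u = v" using Top_inv[OF v] unfolding Top_eq_mop by auto
  show "Wrep WIi v \<in> Vspace" unfolding Wrep_Ii_eq by (rule mop_in_Vspace) (auto simp: diagm_def)
  show "iota x0 (Wrep WIi v) = act Trep (flat_gen WIi) (iota x0 v)"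
  proof
    fix p :: "('f^'n) set \<times> ('f^'n) set"
    obtain y z where p: "p = (y, z)" by fastforce
    have "iota x0 (Wrep WIi v) p = (\<Sum>a\<in>Lsub. ?u a * (Ii_weight a * (if y = Y a \<and> z = Z a then 1 else 0)))"
      unfolding p Wrep_Ii_eq iota_mop[OF u(1)] by (rule sum.cong[OF refl]) (simp add: iota_col_diagm)
    also have "\<dots> = (\<Sum>a\<in>Lsub. ?u a * iota_col T_mat a y z)"
      using Ii_weight_eq iota_col_T by (intro sum.cong refl) simp
    also have "\<dots> = iota x0 (mop T_mat ?u) p" unfolding p iota_mop[OF u(1)] ..
    also have "\<dots> = iota x0 v p" using u(2) by simp
    finally show "iota x0 (Wrep WIi v) p = act Trep (flat_gen WIi) (iota x0 v) p" by simp
  qed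
qed

lemma intertwines_gen: "v \<in> Vspace \<Longrightarrow> Wrep g v \<in> Vspace \<and> iota x0 (Wrep g v) = act Trep (flat_gen g) (iota x0 v)"
  by (cases g) (simp_all only: intertwines_WE1 intertwines_WE2 intertwines_WF1 intertwines_WF2 intertwines_WK1 intertwines_WK1i intertwines_WK2 intertwines_WK2i intertwines_WI intertwines_WIi)

lemma intertwines_act: "\<forall>v\<in>Vspace. act Wrep X v \<in> Vspace \<and> iota x0 (act Wrep X v) = act Trep (flat X) (iota x0 v)"
proof (induction X)
  case (Gen g)
  then show ?case unfolding flat_def using intertwines_gen by simp
next
  case (Scal c)
  show ?case unfolding flat_def by (simp add: Vspace_def iota_scal)
next
  case (Plus a b)
  show ?case
  proof
    fix v :: "('f^'n) set \<Rightarrow> complex" assume v: "v \<in> Vspace"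
    have "act Wrep a v \<in> Vspace" "act Wrep b v \<in> Vspace" using Plus v by auto
    then have "act Wrep (Plus a b) v \<in> Vspace" unfolding Vspace_def by simp
    moreover have "iota x0 (act Wrep (Plus a b) v) = act Trep (flat (Plus a b)) (iota x0 v)"
      using Plus v unfolding flat_def by (simp add: iota_add)
    ultimately show "act Wrep (Plus a b) v \<in> Vspace \<and> iota x0 (act Wrep (Plus a b) v) = act Trep (flat (Plus a b)) (iota x0 v)" ..
  qed
next
  case (Times a b)
  show ?case
  proof
    fix v :: "('f^'n) set \<Rightarrow> complex" assume v: "v \<in> Vspace"
    have b: "act Wrep b v \<in> Vspace" "iota x0 (act Wrep b v) = act Trep (flat b) (iota x0 v)" using Times v by auto
    have a: "act Wrep a (act Wrep b v) \<in> Vspace" "iota x0 (act Wrep a (act Wrep b v)) = act Trep (flat a) (iota x0 (act Wrep b v))"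
      using Times b(1) by auto
    show "act Wrep (Times a b) v \<in> Vspace \<and> iota x0 (act Wrep (Times a b) v) = act Trep (flat (Times a b)) (iota x0 v)"
      using a b unfolding flat_def by simp
  qed
qed

end

theorem mainTheorem18:
  fixes x0 x1 :: "('f::{field,finite}^'n) set"
    and X :: "wgen fterm"
    and v :: "('f^'n) set \<Rightarrow> complex"
  defines "q \<equiv> complex_of_real (sqrt (real CARD('f)))"
  assumes "vec.subspace x0" and "vec.subspace x1"
    and "x0 \<inter> x1 = {0}" and "ssum x0 x1 = UNIV"
    and "v \<in> Vspace"
  shows "iota x0 (act (Wop q x0 x1) X v)
       = act (tens_act (Umat q 1 x0 UNIV) (Umat q (q ^ vec.dim x0) {0} x0)) (flat X) (iota x0 v)"
proof -
  interpret complement_split x0 x1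
    by (unfold_locales) (use assms(2-5) in auto)
  have "iota x0 (act (Wop (q_of TYPE('f)) x0 x1) X v)
       = act (tens_act (Umat (q_of TYPE('f)) 1 x0 UNIV) (Umat (q_of TYPE('f)) (q_of TYPE('f) ^ vec.dim x0) {0} x0)) (flat X) (iota x0 v)"
    using intertwines_act[of X] assms(6) by blast
  then show ?thesis unfolding q_def q_of_def .
qed

end
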